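(* Let $p=q=3$ and let $\mathcal V_{\mathrm{phys}}$, $\Psi_{lmn}$ and the operators $\hat A_{ij},\hat B_{ij},\hat C_{ij}$ be as in the context. Let $(\cdot,\cdot)$ be an inner product on $\mathcal V_{\mathrm{phys}}$ with respect to which every $\hat A_{ij},\hat B_{ij},\hat C_{ij}$ (acting on $\mathcal V_{\mathrm{phys}}$) is symmetric. Then there is a constant $r>0$ such that $(\Psi_{lmn},\Psi_{l'm'n'})=r(2l+1)\delta_{ll'}\delta_{mm'}\delta_{nn'}$ for all indices.
   Context: On smooth functions of $(\boldsymbol u,\boldsymbol v)\in\mathbb{R}^3\times\mathbb{R}^3$ define $\hat A_{ij}=-i(u_i\partial_{u_j}-u_j\partial_{u_i})$, $\hat B_{ij}=-i(v_i\partial_{v_j}-v_j\partial_{v_i})$, $\hat C_{ij}=u_iv_j+\partial_{u_i}\partial_{v_j}$ for $1\le i,j\le3$. With $u=|\boldsymbol u|$, $v=|\boldsymbol v|$, let $\Psi_{lmn}=j_l(uv)Y_{lm}(\boldsymbol u/u)Y_{ln}(\boldsymbol v/v)$ for integers $l\ge0$, $|m|\le l$, $|n|\le l$, where $j_l$ is the spherical Bessel function of the first kind and $Y_{lm}$ are the standard orthonormal spherical harmonics on $S^2$ (Condon–Shortley phase convention). Let $\mathcal V_{\mathrm{phys}}=\mathrm{span}\{\Psi_{lmn}\}$ (a space invariant under the operators above). *)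

theory Defs
  imports "HOL-Analysis.Analysis" "HOL-Computational_Algebra.Polynomial"
begin

type_synonym phfun = "((real^3) \<times> (real^3)) \<Rightarrow> complex"

definition du :: "3 \<Rightarrow> phfun \<Rightarrow> phfun" where
  "du i f = (\<lambda>(u,v). vector_derivative (\<lambda>t::real. f (u + t *\<^sub>R axis i 1, v)) (at 0))"

definition dv :: "3 \<Rightarrow> phfun \<Rightarrow> phfun" where
  "dv i f = (\<lambda>(u,v). vector_derivative (\<lambda>t::real. f (u, v + t *\<^sub>R axis i 1)) (at 0))"

definition opA :: "3 \<Rightarrow> 3 \<Rightarrow> phfun \<Rightarrow> phfun" where
  "opA i j f = (\<lambda>(u,v). - \<i> * (complex_of_real (u$i) * du j f (u,v)
                                 - complex_of_real (u$j) * du i f (u,v)))"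

definition opB :: "3 \<Rightarrow> 3 \<Rightarrow> phfun \<Rightarrow> phfun" where
  "opB i j f = (\<lambda>(u,v). - \<i> * (complex_of_real (v$i) * dv j f (u,v)
                                 - complex_of_real (v$j) * dv i f (u,v)))"

definition opC :: "3 \<Rightarrow> 3 \<Rightarrow> phfun \<Rightarrow> phfun" where
  "opC i j f = (\<lambda>(u,v). complex_of_real (u$i * v$j) * f (u,v) + du i (dv j f) (u,v))"

definition sph_bessel_j :: "nat \<Rightarrow> real \<Rightarrow> real" where
  "sph_bessel_j l x = (\<Sum>k. (-1)^k * 2^l * fact (k+l) / (fact k * fact (2*k+2*l+1)) * x^(l+2*k))"

definition legendre :: "nat \<Rightarrow> real poly" where
  "legendre l = smult (1 / (2^l * fact l)) ((pderiv ^^ l) ([:-1, 0, 1:] ^ l))"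

text \<open>Orthonormal spherical harmonics (Condon-Shortley phase) as functions of a
  unit vector w = (x,y,z) = (sin th cos ph, sin th sin ph, cos th):
  Y_lm = N_lm P_l^m(cos th) e^(i m ph), P_l^m(t) = (-1)^m (1-t^2)^(m/2) P_l^(m)(t) for m >= 0,
  Y_l(-m) = (-1)^m conj(Y_lm).\<close>
definition sph_norm :: "nat \<Rightarrow> nat \<Rightarrow> real" where
  "sph_norm l k = sqrt ((2 * real l + 1) / (4 * pi) * fact (l - k) / fact (l + k))"

definition sph_Y :: "nat \<Rightarrow> int \<Rightarrow> real^3 \<Rightarrow> complex" where
  "sph_Y l m w =
     (let k = nat \<bar>m\<bar>;
          P = complex_of_real (sph_norm l k * poly ((pderiv ^^ k) (legendre l)) (w$3))
      in if m \<ge> 0 then (-1)^k * P * (Complex (w$1) (w$2))^k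
         else P * (Complex (w$1) (- w$2))^k)"

definition Psi :: "nat \<Rightarrow> int \<Rightarrow> int \<Rightarrow> phfun" where
  "Psi l m n = (\<lambda>(u,v). complex_of_real (sph_bessel_j l (norm u * norm v))
        * sph_Y l m (u /\<^sub>R norm u) * sph_Y l n (v /\<^sub>R norm v))"

definition valid_idx :: "(nat \<times> int \<times> int) set" where
  "valid_idx = {(l,m,n). \<bar>m\<bar> \<le> int l \<and> \<bar>n\<bar> \<le> int l}"

definition Vphys :: "phfun set" where
  "Vphys = {f. \<exists>S c. finite S \<and> S \<subseteq> valid_idx \<and>
              f = (\<lambda>x. \<Sum>(l,m,n)\<in>S. c (l,m,n) * Psi l m n x)}"

definition is_inner_product_on :: "phfun set \<Rightarrow> (phfun \<Rightarrow> phfun \<Rightarrow> complex) \<Rightarrow> bool" where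
  "is_inner_product_on V ip \<longleftrightarrow>
     (\<forall>f\<in>V. \<forall>g\<in>V. \<forall>h\<in>V. ip (\<lambda>x. f x + g x) h = ip f h + ip g h) \<and>
     (\<forall>f\<in>V. \<forall>g\<in>V. \<forall>c. ip (\<lambda>x. c * f x) g = c * ip f g) \<and>
     (\<forall>f\<in>V. \<forall>g\<in>V. ip g f = cnj (ip f g)) \<and>
     (\<forall>f\<in>V. f \<noteq> (\<lambda>x. 0) \<longrightarrow> 0 < Re (ip f f))"

definition symmetric_on :: "phfun set \<Rightarrow> (phfun \<Rightarrow> phfun \<Rightarrow> complex) \<Rightarrow> (phfun \<Rightarrow> phfun) \<Rightarrow> bool" where
  "symmetric_on V ip T \<longleftrightarrow> (\<forall>f\<in>V. \<forall>g\<in>V. ip (T f) g = ip f (T g))"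

end

theory Submission
  imports Defs
begin

text \<open>
  The operators A_ij and B_ij are the angular momenta in u and in v, and Psi_lmn is a joint
  weight vector: A_12 Psi_lmn = m Psi_lmn, B_12 Psi_lmn = n Psi_lmn, and L+ = A_23 + i A_31,
  L- = A_23 - i A_31 (likewise for B) move m (resp. n) up and down with the coefficients
  sqrt((l-m)(l+m+1)) and sqrt((l+m)(l-m+1)). Symmetry of A_12 and B_12 makes the Psi_lmn
  orthogonal for different m or n. As L+ and L- are mutually adjoint, the norm of Psi_lmn does
  not depend on m and n, and Psi_lmn is orthogonal to Psi_l'mn for l < l' (lower from the top
  weight m = l, which L+ annihilates).

  The dependence on l comes from C_33. Writing j_l(x) = x^l G_l(x^2), where G_l' = -G_(l+1)/2
  and G_l(s) + s G_(l+2)(s) = (2l+3) G_(l+1)(s), one finds on the explicit states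
  C_33 Psi_lll = (2l+1)/(2l+3) Psi_(l+1)ll and C_33 Psi_(l+1)ll = Psi_lll + c Psi_(l+2)ll, so
  symmetry of C_33 gives (2l+1) |Psi_(l+1)ll|^2 = (2l+3) |Psi_lll|^2, and therefore
  |Psi_lmn|^2 = (2l+1) |Psi_000|^2.
\<close>

locale inner_product_space_on =
  fixes V :: "phfun set" and ip :: "phfun \<Rightarrow> phfun \<Rightarrow> complex"
  assumes inner_product: "is_inner_product_on V ip"
    and add_closed: "f \<in> V \<Longrightarrow> g \<in> V \<Longrightarrow> (\<lambda>x. f x + g x) \<in> V"
    and scale_closed: "f \<in> V \<Longrightarrow> (\<lambda>x. c * f x) \<in> V"
begin

lemma ip_add_left: "f \<in> V \<Longrightarrow> g \<in> V \<Longrightarrow> h \<in> V \<Longrightarrow> ip (\<lambda>x. f x + g x) h = ip f h + ip g h"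
  using inner_product unfolding is_inner_product_on_def by blast

lemma ip_scale_left: "f \<in> V \<Longrightarrow> g \<in> V \<Longrightarrow> ip (\<lambda>x. c * f x) g = c * ip f g"
  using inner_product unfolding is_inner_product_on_def by blast

lemma ip_commute: "f \<in> V \<Longrightarrow> g \<in> V \<Longrightarrow> ip g f = cnj (ip f g)"
  using inner_product unfolding is_inner_product_on_def by blast

lemma ip_self_pos: "f \<in> V \<Longrightarrow> f \<noteq> (\<lambda>x. 0) \<Longrightarrow> 0 < Re (ip f f)"
  using inner_product unfolding is_inner_product_on_def by blast

lemma ip_scale_right:
  assumes "f \<in> V" "g \<in> V"
  shows "ip f (\<lambda>x. c * g x) = cnj c * ip f g"
proof -
  have "ip f (\<lambda>x. c * g x) = cnj (c * ip g f)"
    using assms by (simp add: ip_commute[of _ f] ip_scale_left scale_closed)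
  then show ?thesis
    using assms by (simp add: ip_commute[of f g])
qed

lemma ip_add_right:
  assumes "f \<in> V" "g \<in> V" "h \<in> V"
  shows "ip f (\<lambda>x. g x + h x) = ip f g + ip f h"
proof -
  have "ip f (\<lambda>x. g x + h x) = cnj (ip g f + ip h f)"
    using assms by (simp add: ip_commute[of _ f] ip_add_left add_closed)
  then show ?thesis
    using assms by (simp add: ip_commute[of f g] ip_commute[of f h])
qed

lemma ip_self_real: "f \<in> V \<Longrightarrow> ip f f = of_real (Re (ip f f))"
  using ip_commute[of f f] by (simp add: complex_eq_iff)

lemma symmetric_eigenvectors_orthogonal:
  assumes T: "symmetric_on V ip T" and "f \<in> V" "g \<in> V"
    and Tf: "T f = (\<lambda>x. of_real a * f x)" and Tg: "T g = (\<lambda>x. of_real b * g x)" and "a \<noteq> b"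
  shows "ip f g = 0"
proof -
  have "of_real a * ip f g = ip (T f) g"
    unfolding Tf using \<open>f \<in> V\<close> \<open>g \<in> V\<close> by (simp add: ip_scale_left)
  also have "\<dots> = ip f (T g)"
    using T \<open>f \<in> V\<close> \<open>g \<in> V\<close> unfolding symmetric_on_def by blast
  also have "\<dots> = of_real b * ip f g"
    unfolding Tg using \<open>f \<in> V\<close> \<open>g \<in> V\<close> by (simp add: ip_scale_right)
  finally show ?thesis
    using \<open>a \<noteq> b\<close> by simp
qed

lemma symmetric_ladder_adjoint:
  assumes "symmetric_on V ip A" "symmetric_on V ip B"
    and "f \<in> V" "g \<in> V" "A f \<in> V" "B f \<in> V" "A g \<in> V" "B g \<in> V"
  shows "ip (\<lambda>z. A f z + \<i> * B f z) g = ip f (\<lambda>z. A g z - \<i> * B g z)"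
proof -
  have "ip (A f) g = ip f (A g)" "ip (B f) g = ip f (B g)"
    using assms unfolding symmetric_on_def by blast+
  then have "ip (\<lambda>z. A f z + \<i> * B f z) g = ip f (A g) + \<i> * ip f (B g)"
    using assms by (simp add: ip_add_left ip_scale_left scale_closed)
  also have "\<dots> = ip f (A g) + ip f (\<lambda>z. (- \<i>) * B g z)"
    using assms by (simp only: ip_scale_right) simp
  also have "\<dots> = ip f (\<lambda>z. A g z + (- \<i>) * B g z)"
    using assms by (intro ip_add_right[symmetric] scale_closed)
  finally show ?thesis
    by simp
qed

end

section \<open>Spherical Bessel functions as power series\<close>

definition bessel_coeff :: "nat \<Rightarrow> nat \<Rightarrow> real" where
  "bessel_coeff l k = (-1)^k * 2^l * fact (k+l) / (fact k * fact (2*k+2*l+1))"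

definition bessel_red :: "nat \<Rightarrow> real \<Rightarrow> real" where
  "bessel_red l s = (\<Sum>k. bessel_coeff l k * s^k)"

lemma abs_bessel_coeff_le: "\<bar>bessel_coeff l k\<bar> \<le> 2^l / fact k"
proof -
  have "fact (k+l) / fact (2*k+2*l+1) \<le> (1::real)"
    by (intro divide_le_eq_1_pos[THEN iffD2] fact_mono) auto
  then have "2^l / fact k * (fact (k+l) / fact (2*k+2*l+1)) \<le> (2^l / fact k :: real)"
    by (intro mult_left_le) auto
  then show ?thesis
    by (simp add: bessel_coeff_def abs_mult)
qed

lemma summable_bessel_coeff: "summable (\<lambda>k. bessel_coeff l k * s^k)"
proof (rule summable_comparison_test)
  show "\<exists>N. \<forall>k\<ge>N. norm (bessel_coeff l k * s^k) \<le> 2^l * (inverse (fact k) * \<bar>s\<bar>^k)"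
    using abs_bessel_coeff_le[of l]
    by (auto simp: abs_mult power_abs divide_inverse mult.assoc[symmetric] intro!: mult_right_mono)
  show "summable (\<lambda>k. 2^l * (inverse (fact k) * \<bar>s\<bar>^k :: real))"
    by (intro summable_mult summable_exp)
qed

lemma sph_bessel_j_eq_bessel_red: "sph_bessel_j l x = x^l * bessel_red l (x^2)"
proof -
  have "(\<lambda>k. (-1)^k * 2^l * fact (k+l) / (fact k * fact (2*k+2*l+1)) * x^(l+2*k))
        = (\<lambda>k. x^l * (bessel_coeff l k * (x^2)^k))"
    by (auto simp: bessel_coeff_def power_add power_mult)
  then show ?thesis
    unfolding sph_bessel_j_def bessel_red_def by (simp add: suminf_mult summable_bessel_coeff)
qed

lemma bessel_coeff_Suc:
  "bessel_coeff l (Suc k) = - bessel_coeff l k / (2 * (real k + 1) * (2 * real k + 2 * real l + 3))"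
proof -
  define a b c where "a = real k + real l + 1" and "b = real k + 1" and "c = 2 * real k + 2 * real l + 3"
  have "fact (Suc k + l) = a * fact (k + l)"
    and "fact (2 * Suc k + 2 * l + 1) = c * (2 * a) * fact (2 * k + 2 * l + 1)"
    and "fact (Suc k) = b * fact k"
    by (simp_all add: a_def b_def c_def fact_Suc algebra_simps)
  moreover have "a \<noteq> 0" "b \<noteq> 0" "c \<noteq> 0"
    by (simp_all add: a_def b_def c_def add_pos_nonneg)
  ultimately show ?thesis
    unfolding bessel_coeff_def b_def[symmetric] c_def[symmetric] by (simp add: field_simps del: fact_Suc)
qed

lemma bessel_coeff_Suc_order:
  "bessel_coeff (Suc l) k = bessel_coeff l k / (2 * real k + 2 * real l + 3)"
proof -
  define a c where "a = real k + real l + 1" and "c = 2 * real k + 2 * real l + 3"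
  have "fact (k + Suc l) = a * fact (k + l)"
    and "fact (2 * k + 2 * Suc l + 1) = c * (2 * a) * fact (2 * k + 2 * l + 1)"
    by (simp_all add: a_def c_def fact_Suc algebra_simps)
  moreover have "a \<noteq> 0" "c \<noteq> 0"
    by (simp_all add: a_def c_def add_pos_nonneg)
  ultimately show ?thesis
    unfolding bessel_coeff_def c_def[symmetric] by (simp add: field_simps del: fact_Suc)
qed

lemma diffs_bessel_coeff: "diffs (bessel_coeff l) k = - bessel_coeff (Suc l) k / 2"
proof -
  define b c where "b = real k + 1" and "c = 2 * real k + 2 * real l + 3"
  have "b \<noteq> 0" "c \<noteq> 0"
    unfolding b_def c_def by (simp_all add: add_pos_nonneg)
  moreover have "real (Suc k) = b"
    unfolding b_def by simp
  ultimately show ?thesis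
    unfolding diffs_def bessel_coeff_Suc bessel_coeff_Suc_order b_def[symmetric] c_def[symmetric]
    by (simp add: field_simps)
qed

lemma bessel_coeff_recurrence:
  "bessel_coeff l (Suc k) + bessel_coeff (l+2) k = (2 * real l + 3) * bessel_coeff (Suc l) (Suc k)"
proof -
  define d1 d2 d3 where "d1 = 2 * (real k + 1)" and "d2 = 2 * real k + 2 * real l + 3"
    and "d3 = 2 * real k + 2 * real l + 5"
  have nz: "d1 \<noteq> 0" "d2 \<noteq> 0" "d3 \<noteq> 0"
    unfolding d1_def d2_def d3_def by (simp_all add: add_pos_nonneg)
  have h1: "bessel_coeff (l+2) k = bessel_coeff l k / (d2 * d3)"
    unfolding numeral_2_eq_2 add_Suc_right add_0_right bessel_coeff_Suc_order d2_def d3_def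
    by (simp add: field_simps)
  have h2: "bessel_coeff (Suc l) (Suc k) = - bessel_coeff l k / (d1 * d2 * d3)"
    unfolding bessel_coeff_Suc bessel_coeff_Suc_order d1_def d2_def d3_def by (simp add: field_simps)
  have h3: "bessel_coeff l (Suc k) = - bessel_coeff l k / (d1 * d2)"
    unfolding bessel_coeff_Suc d1_def d2_def by (simp add: field_simps)
  have "2 * real l + 3 = d3 - d1"
    unfolding d1_def d3_def by simp
  note d3_eq = this
  show ?thesis
    unfolding h1 h2 h3 d3_eq using nz by (simp add: field_simps)
qed

lemma bessel_red_has_derivative:
  "(bessel_red l has_real_derivative - bessel_red (Suc l) s / 2) (at s)"
proof -
  have "(bessel_red l has_real_derivative (\<Sum>k. diffs (bessel_coeff l) k * s^k)) (at s)"
    unfolding bessel_red_def[abs_def]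
    by (rule termdiffs_strong_converges_everywhere) (rule summable_bessel_coeff)
  moreover have "(\<Sum>k. diffs (bessel_coeff l) k * s^k) = - bessel_red (Suc l) s / 2"
    unfolding diffs_bessel_coeff bessel_red_def
    using suminf_mult[OF summable_bessel_coeff[of "Suc l" s], of "-1/2"] by (simp add: field_simps)
  ultimately show ?thesis
    by simp
qed

lemma bessel_red_recurrence:
  "bessel_red l s + s * bessel_red (l+2) s = (2 * real l + 3) * bessel_red (Suc l) s"
proof -
  have shifted: "summable (\<lambda>k. bessel_coeff l (Suc k) * s^Suc k)" for l
    using summable_bessel_coeff[of l s] summable_Suc_iff[of "\<lambda>k. bessel_coeff l k * s^k"] by simp
  have head: "bessel_red l s = bessel_coeff l 0 + (\<Sum>k. bessel_coeff l (Suc k) * s^Suc k)" for l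
    unfolding bessel_red_def using suminf_split_head[OF summable_bessel_coeff[of l s]] by simp
  have times_s: "s * bessel_red (l+2) s = (\<Sum>k. bessel_coeff (l+2) k * s^Suc k)"
    unfolding bessel_red_def using suminf_mult[OF summable_bessel_coeff[of "l+2" s], of s]
    by (simp add: algebra_simps)
  have times_s_summable: "summable (\<lambda>k. bessel_coeff (l+2) k * s^Suc k)"
    using summable_mult[OF summable_bessel_coeff[of "l+2" s], of s] by (simp add: algebra_simps)
  have "(\<Sum>k. bessel_coeff l (Suc k) * s^Suc k) + (\<Sum>k. bessel_coeff (l+2) k * s^Suc k)
      = (\<Sum>k. (bessel_coeff l (Suc k) + bessel_coeff (l+2) k) * s^Suc k)"
    using suminf_add[OF shifted times_s_summable] by (simp add: algebra_simps)
  also have "\<dots> = (\<Sum>k. (2 * real l + 3) * (bessel_coeff (Suc l) (Suc k) * s^Suc k))"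
    by (simp only: bessel_coeff_recurrence mult.assoc)
  also have "\<dots> = (2 * real l + 3) * (\<Sum>k. bessel_coeff (Suc l) (Suc k) * s^Suc k)"
    using suminf_mult[OF shifted] by simp
  moreover have "bessel_coeff l 0 = (2 * real l + 3) * bessel_coeff (Suc l) 0"
    by (simp add: bessel_coeff_Suc_order)
  ultimately show ?thesis
    using head[of l] head[of "Suc l"] times_s by (simp add: algebra_simps)
qed

lemma bessel_red_0_0: "bessel_red 0 0 = 1"
  unfolding bessel_red_def using powser_zero[of "bessel_coeff 0"] by (simp add: bessel_coeff_def)

section \<open>Derivatives of Legendre polynomials\<close>

definition x2m1 :: "real poly" where "x2m1 = [:-1, 0, 1:]"

definition rodrigues_deriv :: "nat \<Rightarrow> nat \<Rightarrow> real poly" where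
  "rodrigues_deriv l k = (pderiv ^^ k) (x2m1 ^ l)"

definition legendre_deriv :: "nat \<Rightarrow> nat \<Rightarrow> real poly" where
  "legendre_deriv l k = (pderiv ^^ k) (legendre l)"

definition legendre_top :: "nat \<Rightarrow> real" where
  "legendre_top l = fact (2*l) / (2^l * fact l)"

lemma poly_x2m1 [simp]: "poly x2m1 t = t^2 - 1"
  by (simp add: x2m1_def algebra_simps power2_eq_square)

lemma pderiv_x2m1 [simp]: "pderiv x2m1 = [:0, 2:]"
  by (simp add: x2m1_def pderiv_pCons)

lemma rodrigues_deriv_Suc: "rodrigues_deriv l (Suc k) = pderiv (rodrigues_deriv l k)"
  by (simp add: rodrigues_deriv_def)

lemma legendre_deriv_Suc: "legendre_deriv l (Suc k) = pderiv (legendre_deriv l k)"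
  by (simp add: legendre_deriv_def)

lemma rodrigues_deriv_recurrence:
  "x2m1 * rodrigues_deriv l (Suc k) = [:0, 2*real l - 2*real k:] * rodrigues_deriv l k
     + [:2*real l*real k - real k*(real k - 1):] * rodrigues_deriv l (k-1)"
proof (induction k)
  case 0
  show ?case
  proof (cases l)
    case (Suc j)
    have "pderiv (x2m1 ^ Suc j) = smult (real (Suc j)) (x2m1 ^ j) * [:0,2:]"
      using pderiv_power_Suc[of x2m1 j] by (simp add: x2m1_def pderiv_pCons)
    then show ?thesis
      using Suc by (intro poly_eq_poly_eq_iff[THEN iffD1] ext) (simp add: rodrigues_deriv_def)
  qed (simp add: rodrigues_deriv_def)
next
  case (Suc k)
  have shift: "smult (2*real l*real k - real k*(real k - 1)) (rodrigues_deriv l (Suc (k - Suc 0)))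
      = smult (2*real l*real k - real k*(real k - 1)) (rodrigues_deriv l k)"
    by (cases k) auto
  have "pderiv (x2m1 * rodrigues_deriv l (Suc k)) = pderiv ([:0, 2*real l - 2*real k:] * rodrigues_deriv l k
     + [:2*real l*real k - real k*(real k - 1):] * rodrigues_deriv l (k-1))"
    using Suc.IH by simp
  then have "x2m1 * rodrigues_deriv l (Suc (Suc k)) + rodrigues_deriv l (Suc k) * [:0,2:] =
      [:0, 2*real l - 2*real k:] * rodrigues_deriv l (Suc k) + rodrigues_deriv l k * [:2*real l - 2*real k:]
      + [:2*real l*real k - real k*(real k - 1):] * rodrigues_deriv l k"
    unfolding pderiv_mult pderiv_add rodrigues_deriv_Suc[symmetric]
    by (simp add: pderiv_pCons shift)
  then show ?case
    by (intro poly_eq_poly_eq_iff[THEN iffD1] ext)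
      (simp add: poly_eq_poly_eq_iff[symmetric] fun_eq_iff algebra_simps)
qed

lemma legendre_ode:
  "x2m1 * legendre_deriv l 2 = [:0, -2:] * legendre_deriv l 1 + [:real l * (real l + 1):] * legendre_deriv l 0"
proof -
  have rec: "x2m1 * rodrigues_deriv l (Suc (Suc l))
      = [:0, -2:] * rodrigues_deriv l (Suc l) + [:real l * (real l + 1):] * rodrigues_deriv l l"
    using rodrigues_deriv_recurrence[of l "Suc l"] by (simp add: algebra_simps)
  define d where "d = 1 / (2^l * fact l :: real)"
  have "legendre_deriv l k = smult d (rodrigues_deriv l (k + l))" for k
    by (simp add: legendre_deriv_def legendre_def rodrigues_deriv_def x2m1_def d_def
        higher_pderiv_smult funpow_add)
  then show ?thesis
    using arg_cong[OF rec, of "smult d"] by (simp add: numeral_2_eq_2 smult_add_right)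
qed

lemma legendre_deriv_recurrence:
  "x2m1 * legendre_deriv l (Suc (Suc k)) = [:0, -2*(real k+1):] * legendre_deriv l (Suc k)
    + [:real l*(real l+1) - real k*(real k+1):] * legendre_deriv l k"
proof (induction k)
  case 0
  show ?case
    using legendre_ode[of l] by (simp add: numeral_2_eq_2)
next
  case (Suc k)
  have "pderiv (x2m1 * legendre_deriv l (Suc (Suc k))) = pderiv ([:0, -2*(real k+1):] * legendre_deriv l (Suc k)
    + [:real l*(real l+1) - real k*(real k+1):] * legendre_deriv l k)"
    using Suc.IH by simp
  then have "x2m1 * legendre_deriv l (Suc (Suc (Suc k))) + legendre_deriv l (Suc (Suc k)) * [:0,2:] =
      [:0, -2*(real k+1):] * legendre_deriv l (Suc (Suc k)) + legendre_deriv l (Suc k) * [:-2*(real k+1):]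
      + [:real l*(real l+1) - real k*(real k+1):] * legendre_deriv l (Suc k)"
    unfolding pderiv_mult pderiv_add legendre_deriv_Suc[symmetric] by (simp add: pderiv_pCons)
  then show ?case
    by (intro poly_eq_poly_eq_iff[THEN iffD1] ext)
      (simp add: poly_eq_poly_eq_iff[symmetric] fun_eq_iff algebra_simps)
qed

lemma poly_legendre_deriv_recurrence:
  "(t^2 - 1) * poly (legendre_deriv l (Suc (Suc k))) t =
   - 2*(real k+1) * t * poly (legendre_deriv l (Suc k)) t
   + (real l*(real l+1) - real k*(real k+1)) * poly (legendre_deriv l k) t"
  using arg_cong[OF legendre_deriv_recurrence, of "\<lambda>p. poly p t"] by simp

lemma degree_legendre: "degree (legendre l) = l"
  by (simp add: legendre_def degree_higher_pderiv degree_power_eq)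

lemma legendre_deriv_eq_0: "l < k \<Longrightarrow> legendre_deriv l k = 0"
  by (intro poly_eqI) (simp add: legendre_deriv_def coeff_higher_pderiv coeff_eq_0 degree_legendre)

lemma legendre_deriv_self: "legendre_deriv l l = [:legendre_top l:]"
proof -
  have "degree (legendre_deriv l l) = 0"
    by (simp add: legendre_deriv_def degree_higher_pderiv degree_legendre)
  then have "legendre_deriv l l = [:coeff (legendre_deriv l l) 0:]"
    by (simp add: degree_0_id)
  moreover have "coeff ([:-1, 0, 1:] ^ l) (l + l) = (1::real)"
    using lead_coeff_power[of "[:-1, 0, 1::real:]" l] by (simp add: degree_power_eq mult_2)
  moreover have "fact (l + l) = fact l * pochhammer (real (Suc l)) l"
    using pochhammer_product'[of 1 l l] by (simp add: pochhammer_fact add.commute)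
  ultimately show ?thesis
    by (simp add: legendre_deriv_def legendre_def legendre_top_def coeff_higher_pderiv
        pochhammer_fact[symmetric] higher_pderiv_smult mult_2)
qed

lemma poly_legendre_deriv_self [simp]: "poly (legendre_deriv l l) t = legendre_top l"
  by (simp add: legendre_deriv_self)

lemma legendre_top_pos: "legendre_top l > 0"
  by (simp add: legendre_top_def)

lemma legendre_top_Suc: "legendre_top (Suc l) = (2 * real l + 1) * legendre_top l"
proof -
  define a where "a = real l + 1"
  have "fact (2 * Suc l) = (2 * a) * (2 * real l + 1) * fact (2 * l)"
    and "fact (Suc l) = a * fact l"
    by (simp_all add: a_def fact_Suc algebra_simps)
  note fact_eqs = this
  have "a \<noteq> 0"
    by (simp add: a_def)
  then show ?thesis
    unfolding legendre_top_def fact_eqs by (simp add: field_simps del: fact_Suc)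
qed

lemma poly_legendre_deriv_Suc_self: "poly (legendre_deriv (Suc l) l) t = legendre_top (Suc l) * t"
proof -
  have "(t^2 - 1) * poly (legendre_deriv (Suc l) (Suc (Suc l))) t =
      - 2*(real l+1) * t * poly (legendre_deriv (Suc l) (Suc l)) t
      + (real (Suc l)*(real (Suc l)+1) - real l*(real l+1)) * poly (legendre_deriv (Suc l) l) t"
    by (rule poly_legendre_deriv_recurrence)
  then have "2 * (real l + 1) * poly (legendre_deriv (Suc l) l) t = 2 * (real l + 1) * (legendre_top (Suc l) * t)"
    by (simp add: legendre_deriv_eq_0 legendre_deriv_self algebra_simps)
  moreover have "2 * (real l + 1) \<noteq> 0"
    by simp
  ultimately show ?thesis
    by (metis mult_left_cancel)
qed

lemma poly_legendre_deriv_Suc_Suc_self: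
  "poly (legendre_deriv (Suc (Suc l)) l) t = legendre_top (Suc (Suc l)) * ((2*real l+3)*t^2 - 1) / (4*real l+6)"
proof -
  have "(t^2 - 1) * poly (legendre_deriv (Suc (Suc l)) (Suc (Suc l))) t =
      - 2*(real l+1) * t * poly (legendre_deriv (Suc (Suc l)) (Suc l)) t
      + (real (Suc (Suc l))*(real (Suc (Suc l))+1) - real l*(real l+1)) * poly (legendre_deriv (Suc (Suc l)) l) t"
    by (rule poly_legendre_deriv_recurrence)
  then have "(4*real l+6) * poly (legendre_deriv (Suc (Suc l)) l) t
      = legendre_top (Suc (Suc l)) * ((2*real l+3)*t^2 - 1)"
    using poly_legendre_deriv_Suc_self[of "Suc l" t]
    by (simp add: legendre_deriv_self algebra_simps power2_eq_square)
  moreover have "4*real l+6 \<noteq> 0"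
    by simp
  ultimately show ?thesis
    by (simp add: eq_divide_eq mult.commute)
qed

section \<open>Angular derivatives of a radial function times a harmonic\<close>

definition xy_cplx :: "real \<Rightarrow> real^3 \<Rightarrow> complex" where
  "xy_cplx s w = of_real (w$1) + \<i> * of_real (s * w$2)"

definition harm_factor :: "real \<Rightarrow> nat \<Rightarrow> real poly \<Rightarrow> real^3 \<Rightarrow> complex" where
  "harm_factor s k q w = xy_cplx s w ^ k * of_real (poly q (w$3))"

definition harm_factor_deriv :: "real \<Rightarrow> nat \<Rightarrow> real poly \<Rightarrow> real^3 \<Rightarrow> real^3 \<Rightarrow> complex" where
  "harm_factor_deriv s k q w v = of_nat k * xy_cplx s w ^ (k-1) * xy_cplx s v * of_real (poly q (w$3))
    + xy_cplx s w ^ k * of_real (poly (pderiv q) (w$3) * v$3)"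

lemma has_vector_derivative_power:
  fixes g :: "real \<Rightarrow> complex"
  assumes "(g has_vector_derivative g') (at x)"
  shows "((\<lambda>t. (g t)^n) has_vector_derivative (of_nat n * g x^(n-1) * g')) (at x)"
proof (induction n)
  case 0 thus ?case by (simp add: has_vector_derivative_const)
next
  case (Suc n)
  have "((\<lambda>t. g t * (g t)^n) has_vector_derivative (g x * (of_nat n * g x^(n-1) * g') + g' * g x ^ n)) (at x)"
    by (rule has_vector_derivative_mult[OF assms Suc])
  moreover have "g x * (of_nat n * g x^(n-1) * g') + g' * g x ^ n = of_nat (Suc n) * g x^(Suc n - 1) * g'"
    by (cases n) (simp_all add: algebra_simps)
  ultimately show ?case by simp
qed

lemma has_real_derivative_norm_line:
  fixes x h :: "real^3"
  assumes "x \<noteq> 0"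
  shows "((\<lambda>t. norm (x + t *\<^sub>R h)) has_real_derivative (inner x h / norm x)) (at 0)"
proof -
  have n: "(norm has_derivative (\<lambda>y. inner y (sgn x))) (at (x + 0 *\<^sub>R h))"
    using has_derivative_norm[OF assms] by simp
  have l: "((\<lambda>t. x + t *\<^sub>R h) has_derivative (\<lambda>t. t *\<^sub>R h)) (at 0)"
    by (auto intro!: derivative_eq_intros)
  have "((\<lambda>t. norm (x + t *\<^sub>R h)) has_derivative (\<lambda>t. inner (t *\<^sub>R h) (sgn x))) (at 0)"
    using has_derivative_compose[OF l n] by simp
  moreover have "(\<lambda>t. inner (t *\<^sub>R h) (sgn x)) = (*) (inner x h / norm x)"
    by (auto simp: sgn_div_norm inner_commute field_simps)
  ultimately show ?thesis unfolding has_field_derivative_def by simp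
qed

lemma has_real_derivative_normalized_component:
  fixes x h :: "real^3"
  assumes "x \<noteq> 0"
  shows "((\<lambda>t. (x$i + t * h$i) / norm (x + t *\<^sub>R h)) has_real_derivative
      (h$i / norm x - inner x h / norm x ^ 3 * x$i)) (at 0)"
proof -
  have nz: "norm x \<noteq> 0" using assms by simp
  have "((\<lambda>t. (x$i + t * h$i) / norm (x + t *\<^sub>R h)) has_real_derivative
      ((h$i * norm (x + 0 *\<^sub>R h) - (x$i + 0 * h$i) * (inner x h / norm x)) / (norm (x + 0 *\<^sub>R h) * norm (x + 0 *\<^sub>R h)))) (at 0)"
    by (rule DERIV_divide) (auto intro!: derivative_eq_intros has_real_derivative_norm_line assms)
  moreover have "(h$i * norm (x + 0 *\<^sub>R h) - (x$i + 0 * h$i) * (inner x h / norm x)) / (norm (x + 0 *\<^sub>R h) * norm (x + 0 *\<^sub>R h))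
      = h$i / norm x - inner x h / norm x ^ 3 * x$i"
    using nz by (simp add: field_simps power2_eq_square power3_eq_cube)
  ultimately show ?thesis by simp
qed

lemma divideR_component: "((y::real^3) /\<^sub>R n) $ i = y$i / n"
  by (simp add: divide_inverse_commute)

lemma has_vector_derivative_radial_harm:
  fixes x h :: "real^3" and \<phi> :: "real \<Rightarrow> complex"
  assumes "x \<noteq> 0" "(\<phi> has_vector_derivative \<phi>') (at (norm x))"
  shows "((\<lambda>t. \<phi> (norm (x + t *\<^sub>R h)) * harm_factor s k q ((x + t *\<^sub>R h) /\<^sub>R norm (x + t *\<^sub>R h)))
    has_vector_derivative
   ((inner x h / norm x) *\<^sub>R \<phi>' * harm_factor s k q (x /\<^sub>R norm x)
    + \<phi> (norm x) * harm_factor_deriv s k q (x /\<^sub>R norm x) ((1/norm x) *\<^sub>R h - (inner x h / norm x ^ 3) *\<^sub>R x))) (at 0)"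
proof -
  define N where "N = (\<lambda>t. norm (x + t *\<^sub>R h))"
  define V where "V = (\<lambda>i t. (x$i + t * h$i) / N t)"
  define V' where "V' = (\<lambda>i. h$i / norm x - inner x h / norm x ^ 3 * x$i)"
  have N0: "N 0 = norm x" by (simp add: N_def)
  have V0: "V i 0 = (x /\<^sub>R norm x) $ i" for i by (simp add: V_def N_def divide_inverse_commute)
  have dV: "(V i has_real_derivative V' i) (at 0)" for i
    unfolding V_def V'_def N_def using has_real_derivative_normalized_component[OF assms(1)] .
  have dN: "(N has_real_derivative (inner x h / norm x)) (at 0)"
    unfolding N_def by (rule has_real_derivative_norm_line[OF assms(1)])
  define g where "g = (\<lambda>t. of_real (V 1 t) + \<i> * of_real (s * V 2 t) :: complex)"
  have dg: "(g has_vector_derivative (of_real (V' 1) + \<i> * of_real (s * V' 2))) (at 0)"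
    unfolding g_def by (auto intro!: derivative_eq_intros dV)
  have dgk: "((\<lambda>t. (g t)^k) has_vector_derivative (of_nat k * g 0^(k-1) * (of_real (V' 1) + \<i> * of_real (s * V' 2)))) (at 0)"
    by (rule has_vector_derivative_power[OF dg])
  have dP: "((\<lambda>t. poly q (V 3 t)) has_real_derivative (poly (pderiv q) (V 3 0) * V' 3)) (at 0)"
    by (rule DERIV_chain2[OF poly_DERIV dV])
  have dP2: "((\<lambda>t. of_real (poly q (V 3 t)) :: complex) has_vector_derivative of_real (poly (pderiv q) (V 3 0) * V' 3)) (at 0)"
    by (rule has_vector_derivative_of_real[OF dP])
  have dphi: "((\<lambda>t. \<phi> (N t)) has_vector_derivative ((inner x h / norm x) *\<^sub>R \<phi>')) (at 0)"
    using vector_diff_chain_at[OF dN[unfolded has_real_derivative_iff_has_vector_derivative], of \<phi> \<phi>']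
      assms(2) by (simp add: N0 o_def)
  have dF: "((\<lambda>t. \<phi> (N t) * ((g t)^k * of_real (poly q (V 3 t)))) has_vector_derivative
     (\<phi> (N 0) * ((g 0)^k * of_real (poly (pderiv q) (V 3 0) * V' 3) + (of_nat k * g 0^(k-1) * (of_real (V' 1) + \<i> * of_real (s * V' 2))) * of_real (poly q (V 3 0)))
      + ((inner x h / norm x) *\<^sub>R \<phi>') * ((g 0)^k * of_real (poly q (V 3 0))))) (at 0)"
    by (intro has_vector_derivative_mult dphi dgk dP2)
  have eqf: "(\<lambda>t. \<phi> (norm (x + t *\<^sub>R h)) * harm_factor s k q ((x + t *\<^sub>R h) /\<^sub>R norm (x + t *\<^sub>R h)))
     = (\<lambda>t. \<phi> (N t) * ((g t)^k * of_real (poly q (V 3 t))))"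
    by (auto simp: harm_factor_def xy_cplx_def g_def V_def N_def divide_inverse mult_ac)
  have eqv: "\<phi> (N 0) * ((g 0)^k * of_real (poly (pderiv q) (V 3 0) * V' 3) + (of_nat k * g 0^(k-1) * (of_real (V' 1) + \<i> * of_real (s * V' 2))) * of_real (poly q (V 3 0)))
      + ((inner x h / norm x) *\<^sub>R \<phi>') * ((g 0)^k * of_real (poly q (V 3 0)))
    = (inner x h / norm x) *\<^sub>R \<phi>' * harm_factor s k q (x /\<^sub>R norm x)
    + \<phi> (norm x) * harm_factor_deriv s k q (x /\<^sub>R norm x) ((1/norm x) *\<^sub>R h - (inner x h / norm x ^ 3) *\<^sub>R x)"
    unfolding harm_factor_def harm_factor_deriv_def xy_cplx_def g_def V0[symmetric] N0 V'_def
    by (simp add: algebra_simps divide_inverse_commute)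
  show ?thesis using dF unfolding eqf eqv .
qed

definition partial_deriv :: "3 \<Rightarrow> (real^3 \<Rightarrow> complex) \<Rightarrow> real^3 \<Rightarrow> complex" where
  "partial_deriv j F x = vector_derivative (\<lambda>t. F (x + t *\<^sub>R axis j 1)) (at 0)"

lemma du_eq_partial_deriv: "du j f (u,v) = partial_deriv j (\<lambda>y. f (y,v)) u"
  by (simp add: du_def partial_deriv_def)

lemma dv_eq_partial_deriv: "dv j f (u,v) = partial_deriv j (\<lambda>y. f (u,y)) v"
  by (simp add: dv_def partial_deriv_def)

lemma harm_factor_deriv_eq: "harm_factor_deriv s k q w v = of_real (v$1) * (of_nat k * xy_cplx s w^(k-1) * of_real (poly q (w$3)))
   + of_real (v$2) * (\<i> * of_real s * (of_nat k * xy_cplx s w^(k-1) * of_real (poly q (w$3))))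
   + of_real (v$3) * (xy_cplx s w^k * of_real (poly (pderiv q) (w$3)))"
  unfolding harm_factor_deriv_def xy_cplx_def by (simp add: algebra_simps)

text \<open>The terms carrying the radial derivative P drop out of x_i d_j - x_j d_i.\<close>

lemma radial_terms_cancel:
  fixes xi xj x1 x2 x3 r P P2 Phi A C B di1 di2 di3 dj1 dj2 dj3 :: complex
  assumes "r \<noteq> 0"
  shows "xi * (xj / r * P * P2 + Phi * ((dj1 / r - xj / r^3 * x1) * A + (dj2 / r - xj / r^3 * x2) * C + (dj3 / r - xj / r^3 * x3) * B))
       - xj * (xi / r * P * P2 + Phi * ((di1 / r - xi / r^3 * x1) * A + (di2 / r - xi / r^3 * x2) * C + (di3 / r - xi / r^3 * x3) * B))
     = Phi * (xi / r * (dj1 * A + dj2 * C + dj3 * B) - xj / r * (di1 * A + di2 * C + di3 * B))"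
  using assms by (simp add: field_simps)

lemma angular_deriv_radial_harm:
  fixes x :: "real^3" and \<phi> :: "real \<Rightarrow> complex" and s :: real and k :: nat and q :: "real poly"
  assumes "x \<noteq> 0" "(\<phi> has_vector_derivative \<phi>') (at (norm x))"
  defines "w \<equiv> x /\<^sub>R norm x"
  defines "A \<equiv> of_nat k * xy_cplx s w^(k-1) * of_real (poly q (w$3))"
  defines "B \<equiv> xy_cplx s w^k * of_real (poly (pderiv q) (w$3))"
  shows "of_real (x$i) * partial_deriv j (\<lambda>y. \<phi> (norm y) * harm_factor s k q (y /\<^sub>R norm y)) x
       - of_real (x$j) * partial_deriv i (\<lambda>y. \<phi> (norm y) * harm_factor s k q (y /\<^sub>R norm y)) x
     = \<phi> (norm x) * (of_real (w$i) * (of_real (axis j 1 $ 1) * A + of_real (axis j 1 $ 2) * (\<i> * of_real s * A) + of_real (axis j 1 $ 3) * B)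
                    - of_real (w$j) * (of_real (axis i 1 $ 1) * A + of_real (axis i 1 $ 2) * (\<i> * of_real s * A) + of_real (axis i 1 $ 3) * B))"
proof -
  have r: "norm x \<noteq> 0" using assms(1) by simp
  have p: "partial_deriv j (\<lambda>y. \<phi> (norm y) * harm_factor s k q (y /\<^sub>R norm y)) x =
     (inner x (axis j 1) / norm x) *\<^sub>R \<phi>' * harm_factor s k q w
    + \<phi> (norm x) * harm_factor_deriv s k q w ((1/norm x) *\<^sub>R axis j 1 - (inner x (axis j 1) / norm x ^ 3) *\<^sub>R x)" for j
    unfolding partial_deriv_def w_def by (rule vector_derivative_at[OF has_vector_derivative_radial_harm[OF assms(1,2)]])
  have ix: "inner x (axis j 1) = x$j" for j by (simp add: inner_axis)
  have wc: "w$c = x$c / norm x" for c by (simp add: w_def divide_inverse_commute)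
  have c: "((1/norm x) *\<^sub>R axis j 1 - (x$j / norm x ^ 3) *\<^sub>R x) $ c = (axis j 1 $ c)/norm x - x$j/norm x^3 * x$c" for j c
    by simp
  have sc: "(a::real) *\<^sub>R (z::complex) = of_real a * z" for a z by (simp add: scaleR_conv_of_real)
  have r': "(of_real (norm x) :: complex) \<noteq> 0" using r by simp
  have e: "of_real (a / b) = (of_real a / of_real b :: complex)" for a b by simp
  have e2: "of_real (a - b) = (of_real a - of_real b :: complex)" for a b by simp
  have e3: "of_real (a * b) = (of_real a * of_real b :: complex)" for a b by simp
  have e4: "of_real (a ^ n) = (of_real a ^ n :: complex)" for a n by simp
  show ?thesis unfolding p ix harm_factor_deriv_eq
    unfolding A_def[symmetric] B_def[symmetric]
    unfolding c sc wc
    unfolding e e2 e3 e4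
    by (rule radial_terms_cancel[OF r'])
qed

section \<open>Ladder operators on spherical harmonics\<close>

definition msign :: "int \<Rightarrow> real" where "msign m = (if 0 \<le> m then 1 else -1)"
definition sph_Y_coeff :: "nat \<Rightarrow> int \<Rightarrow> complex" where
  "sph_Y_coeff l m = (if 0 \<le> m then (-1)^(nat \<bar>m\<bar>) else 1) * of_real (sph_norm l (nat \<bar>m\<bar>))"

lemma sph_Y_eq_harm_factor: "sph_Y l m w = sph_Y_coeff l m * harm_factor (msign m) (nat \<bar>m\<bar>) (legendre_deriv l (nat \<bar>m\<bar>)) w"
  by (simp add: sph_Y_def sph_Y_coeff_def msign_def harm_factor_def xy_cplx_def legendre_deriv_def Let_def Complex_eq)

lemma sph_Y_eq_0: "nat \<bar>m\<bar> > l \<Longrightarrow> sph_Y l m w = 0"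
  by (simp add: sph_Y_eq_harm_factor harm_factor_def legendre_deriv_eq_0)

lemma sph_norm_ladder:
  assumes "k < l"
  shows "sph_norm l k = sqrt (real ((l-k)*(l+k+1))) * sph_norm l (Suc k)"
proof -
  define c where "c = (2 * real l + 1) / (4 * pi)"
  have c: "c \<ge> 0" unfolding c_def by simp
  have f1: "(fact (l - k) :: real) = real (l-k) * fact (l - Suc k)"
    using assms by (metis Suc_diff_Suc fact_Suc of_nat_mult)
  have f2: "(fact (l + Suc k) :: real) = real (l+k+1) * fact (l + k)"
    by (simp add: fact_Suc)
  have p: "real (l+k+1) > 0" "(fact (l+k)::real) > 0" by auto
  have "sqrt (real ((l-k)*(l+k+1))) * sph_norm l (Suc k)
      = sqrt (real ((l-k)*(l+k+1)) * (c * fact (l - Suc k) / fact (l + Suc k)))"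
    by (simp only: sph_norm_def c_def real_sqrt_mult)
  also have "real ((l-k)*(l+k+1)) * (c * fact (l - Suc k) / fact (l + Suc k)) = c * fact (l-k) / fact (l+k)"
  proof -
    define E where "E = real (l+k+1)"
    define D where "D = real (l-k)"
    define F where "F = (fact (l+k) :: real)"
    have pe: "E \<noteq> 0" "F \<noteq> 0" unfolding E_def F_def by auto
    have "real ((l-k)*(l+k+1)) = D * E" unfolding D_def E_def by (simp only: of_nat_mult)
    thus ?thesis unfolding f1 f2 E_def[symmetric] D_def[symmetric] F_def[symmetric] using pe
      by (simp add: field_simps)
  qed
  finally show ?thesis unfolding sph_norm_def c_def by simp
qed

lemma sph_norm_pos: "k \<le> l \<Longrightarrow> sph_norm l k > 0"
  by (simp add: sph_norm_def)

text \<open>Up to the factor sph_Y_coeff, the derivatives of Y_lm with respect to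
  xy_cplx (msign m) w and to w$3.\<close>

definition sph_dxy :: "nat \<Rightarrow> int \<Rightarrow> real^3 \<Rightarrow> complex" where
  "sph_dxy l m w = of_nat (nat \<bar>m\<bar>) * xy_cplx (msign m) w ^ (nat \<bar>m\<bar> - 1) * of_real (poly (legendre_deriv l (nat \<bar>m\<bar>)) (w$3))"
definition sph_dz :: "nat \<Rightarrow> int \<Rightarrow> real^3 \<Rightarrow> complex" where
  "sph_dz l m w = xy_cplx (msign m) w ^ (nat \<bar>m\<bar>) * of_real (poly (legendre_deriv l (Suc (nat \<bar>m\<bar>))) (w$3))"
definition raise_coeff :: "nat \<Rightarrow> int \<Rightarrow> real" where
  "raise_coeff l m = sqrt (of_int ((int l - m) * (int l + m + 1)))"
definition lower_coeff :: "nat \<Rightarrow> int \<Rightarrow> real" where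
  "lower_coeff l m = sqrt (of_int ((int l + m) * (int l - m + 1)))"

lemma raise_coeff_0_0: "raise_coeff 0 0 = 0" by (simp add: raise_coeff_def)
lemma lower_coeff_0_0: "lower_coeff 0 0 = 0" by (simp add: lower_coeff_def)

lemma raise_coeff_top: "raise_coeff l (int l) = 0"
  by (simp add: raise_coeff_def)

lemma raise_coeff_eq_lower_coeff: "raise_coeff l m = lower_coeff l (m+1)"
  by (simp add: raise_coeff_def lower_coeff_def algebra_simps)

lemma lower_coeff_pos:
  assumes "- int l \<le> m" "m < int l"
  shows "lower_coeff l (m+1) > 0"
proof -
  have "0 < (int l + (m+1)) * (int l - (m+1) + 1)"
    using assms by (intro mult_pos_pos) auto
  then show ?thesis
    unfolding lower_coeff_def by (simp del: of_int_mult add: of_int_mult[symmetric])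
qed

lemma sph_Y_eq: "sph_Y l m w = sph_Y_coeff l m * xy_cplx (msign m) w ^ (nat \<bar>m\<bar>) * of_real (poly (legendre_deriv l (nat \<bar>m\<bar>)) (w$3))"
  by (simp add: sph_Y_eq_harm_factor harm_factor_def xy_cplx_def)

lemma sph_dxy_Lz: "sph_Y_coeff l m * (of_real (msign m) * sph_dxy l m w * xy_cplx (msign m) w) = of_int m * sph_Y l m w"
proof (cases "nat \<bar>m\<bar>")
  case 0
  hence "m = 0" by simp
  thus ?thesis by (simp add: sph_dxy_def)
next
  case (Suc j)
  have mm: "m = (if 0 \<le> m then int (Suc j) else - int (Suc j))" using Suc by auto
  have m: "of_int m = (of_real (msign m) * of_nat (Suc j) :: complex)"
    by (subst mm) (auto simp: msign_def)
  show ?thesis unfolding sph_Y_eq sph_dxy_def Suc m by (simp add: algebra_simps)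
qed

lemma unit_xy_plus_mult:
  assumes "w$1^2 + w$2^2 + w$3^2 = 1"
  shows "(of_real (w$1) + \<i> * of_real (w$2)) * xy_cplx (-1) w = of_real (1 - w$3^2)"
proof -
  have "(of_real (w$1) + \<i> * of_real (w$2)) * xy_cplx (-1) w = of_real (w$1^2 + w$2^2)"
    by (simp add: xy_cplx_def algebra_simps power2_eq_square)
  moreover have "w$1^2 + w$2^2 = 1 - w$3^2" using assms by simp
  ultimately show ?thesis by simp
qed

lemma sph_Y_raise_neg:
  assumes "m < 0" "\<bar>m\<bar> \<le> int l" "w$1^2 + w$2^2 + w$3^2 = 1"
  shows "sph_Y_coeff l m * ((1 - of_real (msign m)) * of_real (w$3) * sph_dxy l m w - (of_real (w$1) + \<i> * of_real (w$2)) * sph_dz l m w)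
       = of_real (raise_coeff l m) * sph_Y l (m+1) w"
proof -
  define j where "j = nat (- m) - 1"
  have mj: "m = - int (Suc j)" "j < l" using assms(1,2) unfolding j_def by auto
  have norm_step: "sph_norm l j = sqrt (real ((l-j)*(l+j+1))) * sph_norm l (Suc j)"
    by (rule sph_norm_ladder[OF mj(2)])
  obtain d where d: "l = Suc (j + d)" using less_imp_Suc_add[OF mj(2)] by blast
  have coeff_eq: "raise_coeff l m = sqrt (real ((l-j)*(l+j+1)))"
    unfolding raise_coeff_def mj(1) d by (simp add: algebra_simps)
  have coeff_sq: "real ((l-j)*(l+j+1)) = real l * (real l + 1) - real j * (real j + 1)"
    unfolding d by (simp add: algebra_simps)
  have idx: "nat \<bar>m\<bar> = Suc j" "msign m = -1" using mj by (auto simp: msign_def)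
  have Y_next: "sph_Y l (m+1) w = of_real (sph_norm l j) * xy_cplx (-1) w ^ j * of_real (poly (legendre_deriv l j) (w$3))"
  proof (cases j)
    case 0
    hence "m + 1 = 0" using mj by simp
    thus ?thesis using 0 by (simp add: sph_Y_eq sph_Y_coeff_def)
  next
    case (Suc i)
    hence "m + 1 < 0" "nat \<bar>m+1\<bar> = j" "msign (m+1) = -1" using mj by (auto simp: msign_def)
    thus ?thesis by (simp add: sph_Y_eq sph_Y_coeff_def)
  qed
  have rec: "(w$3^2 - 1) * poly (legendre_deriv l (Suc (Suc j))) (w$3) =
    - 2*(real j+1) * w$3 * poly (legendre_deriv l (Suc j)) (w$3) + (real l*(real l+1) - real j*(real j+1)) * poly (legendre_deriv l j) (w$3)"
    by (rule poly_legendre_deriv_recurrence)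
  have xy_mult: "(of_real (w$1) + \<i> * of_real (w$2)) * xy_cplx (-1) w ^ Suc j = of_real (1 - w$3^2) * xy_cplx (-1) w ^ j"
  proof -
    have "(of_real (w$1) + \<i> * of_real (w$2)) * xy_cplx (-1) w ^ Suc j
        = ((of_real (w$1) + \<i> * of_real (w$2)) * xy_cplx (-1) w) * xy_cplx (-1) w ^ j"
      by (simp only: power_Suc mult.assoc)
    thus ?thesis unfolding unit_xy_plus_mult[OF assms(3)] .
  qed
  have "sph_Y_coeff l m * ((1 - of_real (msign m)) * of_real (w$3) * sph_dxy l m w - (of_real (w$1) + \<i> * of_real (w$2)) * sph_dz l m w)
     = of_real (sph_norm l (Suc j)) * (2 * of_real (w$3) * (of_nat (Suc j) * xy_cplx (-1) w ^ j * of_real (poly (legendre_deriv l (Suc j)) (w$3)))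
        - ((of_real (w$1) + \<i> * of_real (w$2)) * xy_cplx (-1) w ^ Suc j) * of_real (poly (legendre_deriv l (Suc (Suc j))) (w$3)))"
    unfolding sph_dxy_def sph_dz_def sph_Y_coeff_def idx using assms(1) by (simp add: mult.assoc)
  also have "\<dots> = of_real (sph_norm l (Suc j)) * xy_cplx (-1) w ^ j *
       of_real (2 * (real j + 1) * w$3 * poly (legendre_deriv l (Suc j)) (w$3) - (1 - w$3^2) * poly (legendre_deriv l (Suc (Suc j))) (w$3))"
    unfolding xy_mult by (simp add: algebra_simps)
  also have "2 * (real j + 1) * w$3 * poly (legendre_deriv l (Suc j)) (w$3) - (1 - w$3^2) * poly (legendre_deriv l (Suc (Suc j))) (w$3)
     = real ((l-j)*(l+j+1)) * poly (legendre_deriv l j) (w$3)"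
    unfolding coeff_sq using rec by (simp add: algebra_simps)
  finally have lhs_eq: "sph_Y_coeff l m * ((1 - of_real (msign m)) * of_real (w$3) * sph_dxy l m w - (of_real (w$1) + \<i> * of_real (w$2)) * sph_dz l m w)
     = of_real (sph_norm l (Suc j)) * xy_cplx (-1) w ^ j * of_real (real ((l-j)*(l+j+1)) * poly (legendre_deriv l j) (w$3))" .
  define X where "X = real ((l-j)*(l+j+1))"
  have sqX: "sqrt X * sqrt X = X" unfolding X_def by simp
  have "of_real (raise_coeff l m) * sph_Y l (m+1) w =
     of_real (sqrt X * sqrt X) * (of_real (sph_norm l (Suc j)) * xy_cplx (-1) w ^ j * of_real (poly (legendre_deriv l j) (w$3)))"
    unfolding Y_next coeff_eq norm_step X_def[symmetric] by (simp only: of_real_mult mult_ac)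
  thus ?thesis unfolding lhs_eq X_def[symmetric] sqX by (simp add: mult_ac)
qed

lemma sph_Y_raise:
  assumes "\<bar>m\<bar> \<le> int l" "w$1^2 + w$2^2 + w$3^2 = 1"
  shows "sph_Y_coeff l m * ((1 - of_real (msign m)) * of_real (w$3) * sph_dxy l m w - (of_real (w$1) + \<i> * of_real (w$2)) * sph_dz l m w)
       = of_real (raise_coeff l m) * sph_Y l (m+1) w"
proof -
  consider (a) "0 \<le> m" "m < int l" | (b) "m = int l" | (c) "m < 0" using assms(1) by linarith
  thus ?thesis
  proof cases
    case a
    define k where "k = nat m"
    have mk: "m = int k" "k < l" using a unfolding k_def by auto
    have norm_step: "sph_norm l k = sqrt (real ((l-k)*(l+k+1))) * sph_norm l (Suc k)"
      by (rule sph_norm_ladder[OF mk(2)])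
    obtain d where d: "l = Suc (k + d)" using less_imp_Suc_add[OF mk(2)] by blast
    have coeff_eq: "raise_coeff l m = sqrt (real ((l-k)*(l+k+1)))"
      unfolding raise_coeff_def mk(1) d by (simp add: algebra_simps)
    have idx: "nat \<bar>m + 1\<bar> = Suc k" "nat \<bar>m\<bar> = k" "msign m = 1" "msign (m+1) = 1" "0 \<le> m+1"
      using mk by (auto simp: msign_def)
    show ?thesis unfolding sph_Y_eq sph_dxy_def sph_dz_def sph_Y_coeff_def idx coeff_eq norm_step using a
      by (simp add: xy_cplx_def algebra_simps)
  next
    case b
    have idx: "nat \<bar>m\<bar> = l" "msign m = 1" using b by (auto simp: msign_def)
    have "raise_coeff l m = 0" unfolding raise_coeff_def b by simp
    thus ?thesis unfolding sph_dxy_def sph_dz_def idx by (simp add: legendre_deriv_eq_0)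
  next
    case c
    then show ?thesis
      using sph_Y_raise_neg assms by blast
  qed
qed

lemma unit_xy_minus_mult:
  assumes "w$1^2 + w$2^2 + w$3^2 = 1"
  shows "(of_real (w$1) - \<i> * of_real (w$2)) * xy_cplx 1 w = of_real (1 - w$3^2)"
proof -
  have "(of_real (w$1) - \<i> * of_real (w$2)) * xy_cplx 1 w = of_real (w$1^2 + w$2^2)"
    by (simp add: xy_cplx_def algebra_simps power2_eq_square)
  moreover have "w$1^2 + w$2^2 = 1 - w$3^2" using assms by simp
  ultimately show ?thesis by simp
qed

lemma xy_cplx_minus: "of_real (w$1) - \<i> * of_real (w$2) = xy_cplx (-1) w"
  by (simp add: xy_cplx_def)

lemma sph_Y_lower_pos:
  assumes "m > 0" "\<bar>m\<bar> \<le> int l" "w$1^2 + w$2^2 + w$3^2 = 1"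
  shows "sph_Y_coeff l m * ((of_real (w$1) - \<i> * of_real (w$2)) * sph_dz l m w - (1 + of_real (msign m)) * of_real (w$3) * sph_dxy l m w)
       = of_real (lower_coeff l m) * sph_Y l (m-1) w"
proof -
  define j where "j = nat m - 1"
  have mj: "m = int (Suc j)" "j < l" using assms(1,2) unfolding j_def by auto
  have norm_step: "sph_norm l j = sqrt (real ((l-j)*(l+j+1))) * sph_norm l (Suc j)"
    by (rule sph_norm_ladder[OF mj(2)])
  obtain d where d: "l = Suc (j + d)" using less_imp_Suc_add[OF mj(2)] by blast
  have coeff_arg: "(int l + m) * (int l - m + 1) = int ((l-j)*(l+j+1))"
    unfolding mj(1) d by (simp add: algebra_simps)
  have coeff_eq: "lower_coeff l m = sqrt (real ((l-j)*(l+j+1)))"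
    unfolding lower_coeff_def coeff_arg by simp
  have coeff_sq: "real ((l-j)*(l+j+1)) = real l * (real l + 1) - real j * (real j + 1)"
    unfolding d by (simp add: algebra_simps)
  have idx: "nat \<bar>m\<bar> = Suc j" "msign m = 1" "0 \<le> m" "nat \<bar>m - 1\<bar> = j" "msign (m-1) = 1" "0 \<le> m - 1"
    using mj by (auto simp: msign_def)
  have rec: "(w$3^2 - 1) * poly (legendre_deriv l (Suc (Suc j))) (w$3) =
    - 2*(real j+1) * w$3 * poly (legendre_deriv l (Suc j)) (w$3) + (real l*(real l+1) - real j*(real j+1)) * poly (legendre_deriv l j) (w$3)"
    by (rule poly_legendre_deriv_recurrence)
  have xy_mult: "(of_real (w$1) - \<i> * of_real (w$2)) * xy_cplx 1 w ^ Suc j = of_real (1 - w$3^2) * xy_cplx 1 w ^ j"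
  proof -
    have "(of_real (w$1) - \<i> * of_real (w$2)) * xy_cplx 1 w ^ Suc j
        = ((of_real (w$1) - \<i> * of_real (w$2)) * xy_cplx 1 w) * xy_cplx 1 w ^ j"
      by (simp only: power_Suc mult.assoc)
    thus ?thesis unfolding unit_xy_minus_mult[OF assms(3)] .
  qed
  have "sph_Y_coeff l m * ((of_real (w$1) - \<i> * of_real (w$2)) * sph_dz l m w - (1 + of_real (msign m)) * of_real (w$3) * sph_dxy l m w)
     = (-1)^Suc j * of_real (sph_norm l (Suc j)) * (((of_real (w$1) - \<i> * of_real (w$2)) * xy_cplx 1 w ^ Suc j) * of_real (poly (legendre_deriv l (Suc (Suc j))) (w$3))
        - 2 * of_real (w$3) * (of_nat (Suc j) * xy_cplx 1 w ^ j * of_real (poly (legendre_deriv l (Suc j)) (w$3))))"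
    unfolding sph_dxy_def sph_dz_def sph_Y_coeff_def idx using assms(1) by (simp add: mult.assoc)
  also have "\<dots> = (-1)^j * of_real (sph_norm l (Suc j)) * xy_cplx 1 w ^ j *
       of_real (2 * (real j + 1) * w$3 * poly (legendre_deriv l (Suc j)) (w$3) - (1 - w$3^2) * poly (legendre_deriv l (Suc (Suc j))) (w$3))"
    unfolding xy_mult by (simp add: algebra_simps)
  also have "2 * (real j + 1) * w$3 * poly (legendre_deriv l (Suc j)) (w$3) - (1 - w$3^2) * poly (legendre_deriv l (Suc (Suc j))) (w$3)
     = real ((l-j)*(l+j+1)) * poly (legendre_deriv l j) (w$3)"
    unfolding coeff_sq using rec by (simp add: algebra_simps)
  finally have lhs_eq: "sph_Y_coeff l m * ((of_real (w$1) - \<i> * of_real (w$2)) * sph_dz l m w - (1 + of_real (msign m)) * of_real (w$3) * sph_dxy l m w)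
     = (-1)^j * of_real (sph_norm l (Suc j)) * xy_cplx 1 w ^ j * of_real (real ((l-j)*(l+j+1)) * poly (legendre_deriv l j) (w$3))" .
  define Xv where "Xv = real ((l-j)*(l+j+1))"
  have sqX: "sqrt Xv * sqrt Xv = Xv" unfolding Xv_def by simp
  have "of_real (lower_coeff l m) * sph_Y l (m-1) w =
     of_real (sqrt Xv * sqrt Xv) * ((-1)^j * of_real (sph_norm l (Suc j)) * xy_cplx 1 w ^ j * of_real (poly (legendre_deriv l j) (w$3)))"
    unfolding sph_Y_eq sph_Y_coeff_def idx coeff_eq norm_step Xv_def[symmetric] using idx(6) by (simp only: of_real_mult mult_ac if_True)
  thus ?thesis unfolding lhs_eq Xv_def[symmetric] sqX by (simp add: mult_ac)
qed

lemma sph_Y_lower: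
  assumes "\<bar>m\<bar> \<le> int l" "w$1^2 + w$2^2 + w$3^2 = 1"
  shows "sph_Y_coeff l m * ((of_real (w$1) - \<i> * of_real (w$2)) * sph_dz l m w - (1 + of_real (msign m)) * of_real (w$3) * sph_dxy l m w)
       = of_real (lower_coeff l m) * sph_Y l (m-1) w"
proof -
  consider (a) "m \<le> 0" "- int l < m" | (b) "m = - int l" | (c) "m > 0" using assms(1) by linarith
  thus ?thesis
  proof cases
    case a
    define k where "k = nat (- m)"
    have mk: "m = - int k" "k < l" using a unfolding k_def by auto
    have norm_step: "sph_norm l k = sqrt (real ((l-k)*(l+k+1))) * sph_norm l (Suc k)"
      by (rule sph_norm_ladder[OF mk(2)])
    obtain d where d: "l = Suc (k + d)" using less_imp_Suc_add[OF mk(2)] by blast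
    have coeff_arg: "(int l + m) * (int l - m + 1) = int ((l-k)*(l+k+1))"
      unfolding mk(1) d by (simp add: algebra_simps)
    have coeff_eq: "lower_coeff l m = sqrt (real ((l-k)*(l+k+1)))"
      unfolding lower_coeff_def coeff_arg by simp
    have idx: "nat \<bar>m - 1\<bar> = Suc k" "nat \<bar>m\<bar> = k" "msign (m-1) = -1" "\<not> 0 \<le> m - 1"
      using mk by (auto simp: msign_def)
    have dxy_term: "(1 + of_real (msign m)) * of_real (w$3) * sph_dxy l m w = 0"
      using mk by (cases "k = 0") (auto simp: msign_def sph_dxy_def)
    have xy_pow: "xy_cplx (msign m) w ^ k = xy_cplx (-1) w ^ k"
      using mk by (cases "k = 0") (auto simp: msign_def)
    have Y_coeff: "sph_Y_coeff l m = of_real (sph_norm l k)"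
      using mk by (cases "k = 0") (auto simp: sph_Y_coeff_def)
    have "sph_Y_coeff l m * ((of_real (w$1) - \<i> * of_real (w$2)) * sph_dz l m w - (1 + of_real (msign m)) * of_real (w$3) * sph_dxy l m w)
       = of_real (sph_norm l k) * (xy_cplx (-1) w * xy_cplx (-1) w ^ k * of_real (poly (legendre_deriv l (Suc k)) (w$3)))"
      unfolding dxy_term Y_coeff xy_cplx_minus sph_dz_def idx xy_pow by (simp add: algebra_simps)
    moreover have "of_real (lower_coeff l m) * sph_Y l (m-1) w = of_real (sph_norm l k) * (xy_cplx (-1) w * xy_cplx (-1) w ^ k * of_real (poly (legendre_deriv l (Suc k)) (w$3)))"
      unfolding sph_Y_eq sph_Y_coeff_def idx coeff_eq norm_step using a by (simp add: mult_ac)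
    ultimately show ?thesis by simp
  next
    case b
    have idx: "nat \<bar>m\<bar> = l" using b by auto
    have "lower_coeff l m = 0" unfolding lower_coeff_def b by simp
    moreover have dxy_term: "(1 + of_real (msign m)) * of_real (w$3) * sph_dxy l m w = 0"
      using b by (cases "l = 0") (auto simp: msign_def sph_dxy_def)
    ultimately show ?thesis unfolding sph_dz_def idx dxy_term by (simp add: legendre_deriv_eq_0)
  next
    case c
    then show ?thesis
      using sph_Y_lower_pos assms by blast
  qed
qed

section \<open>Ladder operators on Psi\<close>

lemma sph_bessel_j_has_derivative: "\<exists>D. (sph_bessel_j l has_real_derivative D) (at x)"
proof -
  have "((\<lambda>x. x^l * bessel_red l (x^2)) has_real_derivative
      (real l * x^(l-1) * bessel_red l (x^2) + x^l * (- bessel_red (Suc l) (x^2) / 2 * (2 * x)))) (at x)"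
    by (auto intro!: derivative_eq_intros DERIV_chain2[OF bessel_red_has_derivative] simp: algebra_simps)
  thus ?thesis unfolding sph_bessel_j_eq_bessel_red[abs_def] by blast
qed

lemma radial_bessel_has_derivative:
  fixes c :: real and a :: complex
  shows "\<exists>D. ((\<lambda>r. of_real (sph_bessel_j l (r * c)) * a) has_vector_derivative D) (at r0)"
proof -
  obtain D where D: "(sph_bessel_j l has_real_derivative D) (at (r0 * c))" using sph_bessel_j_has_derivative by blast
  have g: "((\<lambda>r. r * c) has_real_derivative c) (at r0)" by (auto intro!: derivative_eq_intros)
  have "((\<lambda>r. sph_bessel_j l (r * c)) has_real_derivative (D * c)) (at r0)"
    using DERIV_chain2[OF D g] .
  hence "((\<lambda>r. of_real (sph_bessel_j l (r * c)) * a) has_vector_derivative (of_real (D * c) * a)) (at r0)"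
    by (intro derivative_eq_intros) auto
  thus ?thesis by blast
qed

lemma norm_vec3_sq: "norm (x::real^3) ^ 2 = x$1^2 + x$2^2 + x$3^2"
  by (simp add: norm_vec_def L2_set_def sum_3)

lemma normalized_vec3_sq: "(x::real^3) \<noteq> 0 \<Longrightarrow> (x /\<^sub>R norm x)$1^2 + (x /\<^sub>R norm x)$2^2 + (x /\<^sub>R norm x)$3^2 = 1"
  using norm_vec3_sq[of "x /\<^sub>R norm x"] by simp

lemma axis3_components: "axis (1::3) (1::real) $ 1 = 1" "axis (1::3) (1::real) $ 2 = 0" "axis (1::3) (1::real) $ 3 = 0"
  "axis (2::3) (1::real) $ 1 = 0" "axis (2::3) (1::real) $ 2 = 1" "axis (2::3) (1::real) $ 3 = 0"
  "axis (3::3) (1::real) $ 1 = 0" "axis (3::3) (1::real) $ 2 = 0" "axis (3::3) (1::real) $ 3 = 1"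
  by (simp_all add: axis_def)

locale radial_times_sph_Y =
  fixes \<phi> :: "real \<Rightarrow> complex" and l :: nat and m :: int
  assumes radial_differentiable: "\<And>r. \<exists>D. (\<phi> has_vector_derivative D) (at r)"
    and m_bound: "\<bar>m\<bar> \<le> int l"
begin

definition radial_Y :: "int \<Rightarrow> real^3 \<Rightarrow> complex" where
  "radial_Y mm y = \<phi> (norm y) * sph_Y l mm (y /\<^sub>R norm y)"

definition ang_deriv :: "3 \<Rightarrow> 3 \<Rightarrow> real^3 \<Rightarrow> complex" where
  "ang_deriv i j x = of_real (x$i) * partial_deriv j (radial_Y m) x - of_real (x$j) * partial_deriv i (radial_Y m) x"

lemma ang_deriv_eq:
  assumes "x \<noteq> 0"
  defines "w \<equiv> x /\<^sub>R norm x"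
  shows "ang_deriv i j x = (\<phi> (norm x) * sph_Y_coeff l m) *
     (of_real (w$i) * (of_real (axis j 1 $ 1) * sph_dxy l m w + of_real (axis j 1 $ 2) * (\<i> * of_real (msign m) * sph_dxy l m w) + of_real (axis j 1 $ 3) * sph_dz l m w)
    - of_real (w$j) * (of_real (axis i 1 $ 1) * sph_dxy l m w + of_real (axis i 1 $ 2) * (\<i> * of_real (msign m) * sph_dxy l m w) + of_real (axis i 1 $ 3) * sph_dz l m w))"
proof -
  obtain D where D: "(\<phi> has_vector_derivative D) (at (norm x))" using radial_differentiable by blast
  have D2: "((\<lambda>r. \<phi> r * sph_Y_coeff l m) has_vector_derivative (D * sph_Y_coeff l m)) (at (norm x))"
    by (rule has_vector_derivative_mult_left[OF D])
  have G: "radial_Y m = (\<lambda>y. (\<phi> (norm y) * sph_Y_coeff l m) * harm_factor (msign m) (nat \<bar>m\<bar>) (legendre_deriv l (nat \<bar>m\<bar>)) (y /\<^sub>R norm y))"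
    by (auto simp: radial_Y_def sph_Y_eq_harm_factor mult_ac)
  show ?thesis
    unfolding ang_deriv_def G angular_deriv_radial_harm[OF assms(1) D2, of i j "msign m" "nat \<bar>m\<bar>" "legendre_deriv l (nat \<bar>m\<bar>)"]
    by (simp add: sph_dxy_def sph_dz_def xy_cplx_def w_def legendre_deriv_Suc)
qed

lemma ang_deriv_Lz:
  assumes "x \<noteq> 0"
  shows "-\<i> * ang_deriv 1 2 x = of_int m * radial_Y m x"
proof -
  define w where "w = x /\<^sub>R norm x"
  have "-\<i> * ang_deriv 1 2 x = \<phi> (norm x) * (sph_Y_coeff l m * (of_real (msign m) * sph_dxy l m w * xy_cplx (msign m) w))"
    unfolding ang_deriv_eq[OF assms] w_def[symmetric]
    by (cases "0 \<le> m") (simp_all add: msign_def axis3_components xy_cplx_def algebra_simps)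
  thus ?thesis unfolding sph_dxy_Lz radial_Y_def w_def by (simp add: mult_ac)
qed

lemma ang_deriv_Lplus:
  assumes "x \<noteq> 0"
  shows "-\<i> * ang_deriv 2 3 x + \<i> * (-\<i> * ang_deriv 3 1 x) = of_real (raise_coeff l m) * radial_Y (m+1) x"
proof -
  define w where "w = x /\<^sub>R norm x"
  have "-\<i> * ang_deriv 2 3 x + \<i> * (-\<i> * ang_deriv 3 1 x) = \<phi> (norm x) * (sph_Y_coeff l m * ((1 - of_real (msign m)) * of_real (w$3) * sph_dxy l m w - (of_real (w$1) + \<i> * of_real (w$2)) * sph_dz l m w))"
    unfolding ang_deriv_eq[OF assms] w_def[symmetric]
    by (simp add: axis3_components algebra_simps)
  also have "\<dots> = \<phi> (norm x) * (of_real (raise_coeff l m) * sph_Y l (m+1) w)"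
    by (simp only: sph_Y_raise[OF m_bound normalized_vec3_sq[OF assms, folded w_def]])
  finally show ?thesis unfolding radial_Y_def w_def by (simp add: mult_ac)
qed

lemma ang_deriv_Lminus:
  assumes "x \<noteq> 0"
  shows "-\<i> * ang_deriv 2 3 x - \<i> * (-\<i> * ang_deriv 3 1 x) = of_real (lower_coeff l m) * radial_Y (m-1) x"
proof -
  define w where "w = x /\<^sub>R norm x"
  have "-\<i> * ang_deriv 2 3 x - \<i> * (-\<i> * ang_deriv 3 1 x) = \<phi> (norm x) * (sph_Y_coeff l m * ((of_real (w$1) - \<i> * of_real (w$2)) * sph_dz l m w - (1 + of_real (msign m)) * of_real (w$3) * sph_dxy l m w))"
    unfolding ang_deriv_eq[OF assms] w_def[symmetric]
    by (simp add: axis3_components algebra_simps)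
  also have "\<dots> = \<phi> (norm x) * (of_real (lower_coeff l m) * sph_Y l (m-1) w)"
    by (simp only: sph_Y_lower[OF m_bound normalized_vec3_sq[OF assms, folded w_def]])
  finally show ?thesis unfolding radial_Y_def w_def by (simp add: mult_ac)
qed

end

definition Lplus_u :: "phfun \<Rightarrow> phfun" where "Lplus_u f = (\<lambda>z. opA 2 3 f z + \<i> * opA 3 1 f z)"
definition Lminus_u :: "phfun \<Rightarrow> phfun" where "Lminus_u f = (\<lambda>z. opA 2 3 f z - \<i> * opA 3 1 f z)"
definition Lplus_v :: "phfun \<Rightarrow> phfun" where "Lplus_v f = (\<lambda>z. opB 2 3 f z + \<i> * opB 3 1 f z)"
definition Lminus_v :: "phfun \<Rightarrow> phfun" where "Lminus_v f = (\<lambda>z. opB 2 3 f z - \<i> * opB 3 1 f z)"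

lemma sph_bessel_j_at_0: "l \<ge> 1 \<Longrightarrow> sph_bessel_j l 0 = 0"
  by (simp add: sph_bessel_j_eq_bessel_red)

lemma Psi_zero_left: "l \<ge> 1 \<Longrightarrow> Psi l m n (0, v) = 0"
  by (simp add: Psi_def sph_bessel_j_at_0)

lemma Psi_u_ladder:
  assumes m_bound: "\<bar>m\<bar> \<le> int l"
  shows "opA 1 2 (Psi l m n) = (\<lambda>z. of_int m * Psi l m n z)"
    "Lplus_u (Psi l m n) = (\<lambda>z. of_real (raise_coeff l m) * Psi l (m+1) n z)"
    "Lminus_u (Psi l m n) = (\<lambda>z. of_real (lower_coeff l m) * Psi l (m-1) n z)"
proof -
  have pointwise: "opA 1 2 (Psi l m n) (u,v) = of_int m * Psi l m n (u,v) \<and>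
     Lplus_u (Psi l m n) (u,v) = of_real (raise_coeff l m) * Psi l (m+1) n (u,v) \<and>
     Lminus_u (Psi l m n) (u,v) = of_real (lower_coeff l m) * Psi l (m-1) n (u,v)" for u v
  proof -
    define \<phi> where "\<phi> = (\<lambda>r. of_real (sph_bessel_j l (r * norm v)) * sph_Y l n (v /\<^sub>R norm v))"
    interpret R: radial_times_sph_Y \<phi> l m
      by unfold_locales (auto simp: \<phi>_def radial_bessel_has_derivative m_bound)
    have Psi_eq_radial_Y: "R.radial_Y mm = (\<lambda>y. Psi l mm n (y, v))" for mm
      by (rule ext) (simp only: R.radial_Y_def, simp add: Psi_def \<phi>_def mult_ac)
    have opA_eq_ang_deriv: "opA i j (Psi l m n) (u,v) = -\<i> * R.ang_deriv i j u" for i j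
      unfolding opA_def R.ang_deriv_def Psi_eq_radial_Y du_eq_partial_deriv by simp
    show ?thesis
    proof (cases "u = 0")
      case False
      show ?thesis unfolding Lplus_u_def Lminus_u_def opA_eq_ang_deriv
        using R.ang_deriv_Lz[OF False] R.ang_deriv_Lplus[OF False] R.ang_deriv_Lminus[OF False] unfolding Psi_eq_radial_Y by simp
    next
      case True
      txt \<open>Both sides vanish: j_l(0) = 0 for l > 0, and m = 0 for l = 0.\<close>
      have opA_at_0: "opA i j (Psi l m n) (u,v) = 0" for i j
        unfolding opA_def True by simp
      show ?thesis
      proof (cases "l = 0")
        case True
        hence "m = 0" using m_bound by simp
        thus ?thesis unfolding Lplus_u_def Lminus_u_def opA_at_0 using True by (simp add: raise_coeff_0_0 lower_coeff_0_0)
      next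
        case False
        hence "l \<ge> 1" by simp
        thus ?thesis unfolding Lplus_u_def Lminus_u_def opA_at_0 using \<open>u = 0\<close> by (simp add: Psi_zero_left)
      qed
    qed
  qed
  show "opA 1 2 (Psi l m n) = (\<lambda>z. of_int m * Psi l m n z)"
    using pointwise by (auto simp: fun_eq_iff)
  show "Lplus_u (Psi l m n) = (\<lambda>z. of_real (raise_coeff l m) * Psi l (m+1) n z)"
    using pointwise by (auto simp: fun_eq_iff)
  show "Lminus_u (Psi l m n) = (\<lambda>z. of_real (lower_coeff l m) * Psi l (m-1) n z)"
    using pointwise by (auto simp: fun_eq_iff)
qed

lemma opB_eq_opA_swap: "opB i j f (u,v) = opA i j (\<lambda>(x,y). f (y,x)) (v,u)"
  by (simp add: opA_def opB_def du_def dv_def)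

lemma Psi_swap: "Psi l m n (u,v) = Psi l n m (v,u)"
  by (simp add: Psi_def mult_ac)

lemma Psi_v_ladder:
  assumes "\<bar>n\<bar> \<le> int l"
  shows "opB 1 2 (Psi l m n) = (\<lambda>z. of_int n * Psi l m n z)"
    "Lplus_v (Psi l m n) = (\<lambda>z. of_real (raise_coeff l n) * Psi l m (n+1) z)"
    "Lminus_v (Psi l m n) = (\<lambda>z. of_real (lower_coeff l n) * Psi l m (n-1) z)"
proof -
  have opB: "opB i j (Psi l m n) (u,v) = opA i j (Psi l n m) (v,u)" for i j u v
    using opB_eq_opA_swap[of i j "Psi l m n" u v] Psi_swap[of l m n] by (simp add: case_prod_beta')
  note u_ladder = Psi_u_ladder[of n l m, OF assms]
  show "opB 1 2 (Psi l m n) = (\<lambda>z. of_int n * Psi l m n z)"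
    using fun_cong[OF u_ladder(1)] by (auto simp: fun_eq_iff opB Psi_swap[of l m n])
  show "Lplus_v (Psi l m n) = (\<lambda>z. of_real (raise_coeff l n) * Psi l m (n+1) z)"
    using fun_cong[OF u_ladder(2)] by (auto simp: fun_eq_iff opB Lplus_v_def Lplus_u_def Psi_swap[of l m])
  show "Lminus_v (Psi l m n) = (\<lambda>z. of_real (lower_coeff l n) * Psi l m (n-1) z)"
    using fun_cong[OF u_ladder(3)] by (auto simp: fun_eq_iff opB Lminus_v_def Lminus_u_def Psi_swap[of l m])
qed

section \<open>The top states and C_33\<close>

definition sqnorm :: "real^3 \<Rightarrow> real" where "sqnorm y = y$1^2 + y$2^2 + y$3^2"

lemma sqnorm_eq: "sqnorm y = norm y ^ 2" by (simp add: sqnorm_def norm_vec3_sq)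

lemma norm_pow_xy_cplx: "of_real (norm u) ^ l * xy_cplx 1 (u /\<^sub>R norm u) ^ l = xy_cplx 1 u ^ l"
proof (cases "u = 0")
  case True thus ?thesis by (cases l) (simp_all add: xy_cplx_def xy_cplx_def)
next
  case False
  hence nz: "(of_real (norm u) :: complex) \<noteq> 0" by simp
  have "xy_cplx 1 (u /\<^sub>R norm u) = xy_cplx 1 u / of_real (norm u)"
    unfolding xy_cplx_def xy_cplx_def divideR_component by (simp add: add_divide_distrib)
  thus ?thesis using nz by (simp add: power_divide)
qed

lemma norm_legendre_deriv_Suc_self: "norm u * poly (legendre_deriv (Suc l) l) ((u /\<^sub>R norm u) $ 3) = legendre_top (Suc l) * u$3"
  by (cases "u = 0") (simp_all add: poly_legendre_deriv_Suc_self divideR_component)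

lemma norm_legendre_deriv_Suc_Suc_self: "norm u ^ 2 * poly (legendre_deriv (Suc (Suc l)) l) ((u /\<^sub>R norm u) $ 3)
   = legendre_top (Suc (Suc l)) / (4*real l+6) * ((2*real l+3) * u$3^2 - sqnorm u)"
proof (cases "u = 0")
  case True thus ?thesis by (simp add: sqnorm_def)
next
  case False
  hence nz: "norm u \<noteq> 0" by simp
  have e0: "norm u^2 * (u$3^2/norm u^2) = u$3^2" using nz by simp
  have "norm u^2 * ((2*real l+3)*(u$3/norm u)^2 - 1) = (2*real l+3)*(norm u^2 * (u$3^2/norm u^2)) - norm u^2"
    by (simp only: power_divide right_diff_distrib mult.left_commute mult_1_right)
  hence e: "norm u^2 * ((2*real l+3)*(u$3/norm u)^2 - 1) = (2*real l+3)*u$3^2 - norm u^2"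
    unfolding e0 .
  have "norm u ^ 2 * poly (legendre_deriv (Suc (Suc l)) l) ((u /\<^sub>R norm u) $ 3)
     = legendre_top (Suc (Suc l)) / (4*real l+6) * (norm u^2 * ((2*real l+3)*(u$3/norm u)^2 - 1))"
    unfolding poly_legendre_deriv_Suc_Suc_self divideR_component by simp
  thus ?thesis unfolding e sqnorm_eq .
qed

lemma sph_Y_top: "sph_Y L l w = (-1)^l * of_real (sph_norm L l) * xy_cplx 1 w ^ l * of_real (poly (legendre_deriv L l) (w$3))"
  by (simp add: sph_Y_eq sph_Y_coeff_def msign_def)

lemma sph_bessel_j_norm_mult: "sph_bessel_j L (norm u * norm v) = norm u ^ L * norm v ^ L * bessel_red L (sqnorm u * sqnorm v)"
  by (simp add: sph_bessel_j_eq_bessel_red sqnorm_eq power_mult_distrib)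

definition top_const0 :: "nat \<Rightarrow> real" where "top_const0 l = sph_norm l l ^2 * legendre_top l ^2"
definition top_const1 :: "nat \<Rightarrow> real" where "top_const1 l = sph_norm (Suc l) l ^2 * legendre_top (Suc l) ^2"
definition top_const2 :: "nat \<Rightarrow> real" where "top_const2 l = sph_norm (Suc (Suc l)) l ^2 * (legendre_top (Suc (Suc l)) / (4*real l+6)) ^2"

lemma minus_one_power_square: "((-1::complex)^l) * (-1)^l = 1"
  by (simp add: power_mult_distrib[symmetric])

lemma Psi_top: "Psi l (int l) (int l) (u,v) = of_real (top_const0 l) * xy_cplx 1 u ^ l * xy_cplx 1 v ^ l * of_real (bessel_red l (sqnorm u * sqnorm v))"
proof -
  have "Psi l (int l) (int l) (u,v) = of_real (bessel_red l (sqnorm u * sqnorm v)) * ((-1)^l * (-1)^l) * of_real (sph_norm l l)^2 * of_real (legendre_top l)^2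
     * (of_real (norm u) ^ l * xy_cplx 1 (u /\<^sub>R norm u) ^ l) * (of_real (norm v) ^ l * xy_cplx 1 (v /\<^sub>R norm v) ^ l)"
    unfolding Psi_def by (simp add: sph_Y_top sph_bessel_j_norm_mult power2_eq_square mult_ac)
  thus ?thesis unfolding norm_pow_xy_cplx minus_one_power_square top_const0_def by (simp add: mult_ac)
qed

lemma Psi_top_Suc: "Psi (Suc l) (int l) (int l) (u,v) = of_real (top_const1 l) * xy_cplx 1 u ^ l * xy_cplx 1 v ^ l * of_real (u$3 * v$3 * bessel_red (Suc l) (sqnorm u * sqnorm v))"
proof -
  have "Psi (Suc l) (int l) (int l) (u,v) = of_real (bessel_red (Suc l) (sqnorm u * sqnorm v)) * ((-1)^l * (-1)^l) * of_real (sph_norm (Suc l) l)^2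
     * (of_real (norm u) ^ l * xy_cplx 1 (u /\<^sub>R norm u) ^ l) * (of_real (norm v) ^ l * xy_cplx 1 (v /\<^sub>R norm v) ^ l)
     * of_real (norm u * poly (legendre_deriv (Suc l) l) ((u /\<^sub>R norm u) $ 3)) * of_real (norm v * poly (legendre_deriv (Suc l) l) ((v /\<^sub>R norm v) $ 3))"
    unfolding Psi_def by (simp add: sph_Y_top sph_bessel_j_norm_mult power2_eq_square mult_ac)
  thus ?thesis unfolding norm_pow_xy_cplx minus_one_power_square top_const1_def norm_legendre_deriv_Suc_self by (simp add: mult_ac power2_eq_square)
qed

lemma Psi_top_Suc_Suc: "Psi (Suc (Suc l)) (int l) (int l) (u,v) = of_real (top_const2 l) * xy_cplx 1 u ^ l * xy_cplx 1 v ^ l *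
   of_real (((2*real l+3) * u$3^2 - sqnorm u) * ((2*real l+3) * v$3^2 - sqnorm v) * bessel_red (Suc (Suc l)) (sqnorm u * sqnorm v))"
proof -
  have "Psi (Suc (Suc l)) (int l) (int l) (u,v) = of_real (bessel_red (Suc (Suc l)) (sqnorm u * sqnorm v)) * ((-1)^l * (-1)^l) * of_real (sph_norm (Suc (Suc l)) l)^2
     * (of_real (norm u) ^ l * xy_cplx 1 (u /\<^sub>R norm u) ^ l) * (of_real (norm v) ^ l * xy_cplx 1 (v /\<^sub>R norm v) ^ l)
     * of_real (norm u ^ 2 * poly (legendre_deriv (Suc (Suc l)) l) ((u /\<^sub>R norm u) $ 3)) * of_real (norm v ^ 2 * poly (legendre_deriv (Suc (Suc l)) l) ((v /\<^sub>R norm v) $ 3))"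
    unfolding Psi_def by (simp add: sph_Y_top sph_bessel_j_norm_mult power2_eq_square mult_ac)
  thus ?thesis unfolding norm_pow_xy_cplx minus_one_power_square top_const2_def norm_legendre_deriv_Suc_Suc_self by (simp add: mult_ac power2_eq_square)
qed

lemma axis3_line_components: "(x + t *\<^sub>R axis (3::3) (1::real)) $ (1::3) = x$1" "(x + t *\<^sub>R axis (3::3) (1::real)) $ (2::3) = x$2"
   "(x + t *\<^sub>R axis (3::3) (1::real)) $ (3::3) = x$3 + t" for x :: "real^3"
  by (simp_all add: axis3_components)

lemma sqnorm_axis3_line: "sqnorm (x + t *\<^sub>R axis (3::3) (1::real)) = x$1^2 + x$2^2 + (x$3 + t)^2"
  by (simp add: sqnorm_def axis3_components)

lemma xy_cplx_axis3_line: "xy_cplx 1 (x + t *\<^sub>R axis (3::3) (1::real)) = xy_cplx 1 x"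
  by (simp add: xy_cplx_def axis3_components)

lemma bessel_red_chain[derivative_intros]:
  "(g has_real_derivative g') (at x) \<Longrightarrow> ((\<lambda>t. bessel_red l (g t)) has_real_derivative (- bessel_red (Suc l) (g x) / 2 * g')) (at x)"
  by (rule DERIV_chain2[OF bessel_red_has_derivative])

lemma partial_deriv_3_xy_cplx:
  assumes "((\<lambda>t. F (x + t *\<^sub>R axis 3 1)) has_real_derivative D) (at 0)"
  shows "partial_deriv 3 (\<lambda>y. c * xy_cplx 1 y ^ l * of_real (F y)) x = c * xy_cplx 1 x ^ l * of_real D"
proof -
  have "((\<lambda>t. c * xy_cplx 1 x ^ l * of_real (F (x + t *\<^sub>R axis 3 1))) has_vector_derivative (c * xy_cplx 1 x ^ l * of_real D)) (at 0)"
    by (intro has_vector_derivative_mult_right has_vector_derivative_of_real assms)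
  thus ?thesis unfolding partial_deriv_def xy_cplx_axis3_line by (rule vector_derivative_at)
qed

lemma opC33_xy_cplx:
  fixes F Fv Fuv :: "real^3 \<Rightarrow> real^3 \<Rightarrow> real"
  assumes F_deriv: "\<And>u v. ((\<lambda>t. F u (v + t *\<^sub>R axis 3 1)) has_real_derivative Fv u v) (at 0)"
    and Fv_deriv: "\<And>u v. ((\<lambda>t. Fv (u + t *\<^sub>R axis 3 1) v) has_real_derivative Fuv u v) (at 0)"
  shows "opC 3 3 (\<lambda>(u,v). K * xy_cplx 1 u ^ l * xy_cplx 1 v ^ l * of_real (F u v)) (u,v)
     = K * xy_cplx 1 u^l * xy_cplx 1 v^l * of_real (u$3 * v$3 * F u v + Fuv u v)"
proof -
  have dv: "dv 3 (\<lambda>(u,v). K * xy_cplx 1 u ^ l * xy_cplx 1 v ^ l * of_real (F u v)) = (\<lambda>(u,v). K * xy_cplx 1 u ^ l * xy_cplx 1 v ^ l * of_real (Fv u v))"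
  proof (rule ext, clarify)
    fix u v :: "real^3"
    show "dv 3 (\<lambda>(u,v). K * xy_cplx 1 u ^ l * xy_cplx 1 v ^ l * of_real (F u v)) (u,v) = K * xy_cplx 1 u ^ l * xy_cplx 1 v ^ l * of_real (Fv u v)"
      unfolding dv_eq_partial_deriv using partial_deriv_3_xy_cplx[OF F_deriv[of u v], of "K * xy_cplx 1 u ^ l" l] by simp
  qed
  have du: "du 3 (\<lambda>(u,v). K * xy_cplx 1 u ^ l * xy_cplx 1 v ^ l * of_real (Fv u v)) (u,v) = K * xy_cplx 1 u ^ l * xy_cplx 1 v ^ l * of_real (Fuv u v)"
  proof -
    have restrict_v: "(\<lambda>y. (\<lambda>(u,v). K * xy_cplx 1 u ^ l * xy_cplx 1 v ^ l * of_real (Fv u v)) (y, v)) = (\<lambda>y. (K * xy_cplx 1 v ^ l) * xy_cplx 1 y ^ l * of_real (Fv y v))"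
      by (auto simp: mult_ac)
    show ?thesis unfolding du_eq_partial_deriv restrict_v partial_deriv_3_xy_cplx[OF Fv_deriv[of u v]] by (simp add: mult_ac)
  qed
  show ?thesis unfolding opC_def dv using du by (simp add: algebra_simps)
qed

lemma top_const_pos: "top_const0 l > 0" "top_const1 l > 0" "top_const2 l > 0"
proof -
  have a: "sph_norm l l > 0" "sph_norm (Suc l) l > 0" "sph_norm (Suc (Suc l)) l > 0"
    by (auto intro: sph_norm_pos)
  have b: "legendre_top l > 0" "legendre_top (Suc l) > 0" "legendre_top (Suc (Suc l)) / (4*real l+6) > 0"
    by (auto intro!: legendre_top_pos divide_pos_pos)
  show "top_const0 l > 0" "top_const1 l > 0" unfolding top_const0_def top_const1_def using a b by auto
  show "top_const2 l > 0" unfolding top_const2_def by (intro mult_pos_pos zero_less_power a b)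
qed

lemma sqnorm_axis3_deriv: "((\<lambda>t. sqnorm (x + t *\<^sub>R axis 3 1)) has_real_derivative (2 * x$3)) (at 0)"
  unfolding sqnorm_axis3_line by (auto intro!: derivative_eq_intros)

lemma Psi_top_eq: "Psi l (int l) (int l) = (\<lambda>(u,v). of_real (top_const0 l) * xy_cplx 1 u ^ l * xy_cplx 1 v ^ l * of_real (bessel_red l (sqnorm u * sqnorm v)))"
  by (auto simp: Psi_top)

lemma Psi_top_Suc_eq: "Psi (Suc l) (int l) (int l) = (\<lambda>(u,v). of_real (top_const1 l) * xy_cplx 1 u ^ l * xy_cplx 1 v ^ l * of_real (u$3 * v$3 * bessel_red (Suc l) (sqnorm u * sqnorm v)))"
  by (auto simp: Psi_top_Suc)

lemma sph_norm_sq: "sph_norm l k ^ 2 = (2 * real l + 1) / (4 * pi) * fact (l - k) / fact (l + k)"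
  unfolding sph_norm_def by (rule real_sqrt_pow2) simp

lemma top_const1_eq: "top_const1 l = (2*real l+3) * top_const0 l"
proof -
  have e1: "l + l = 2*l" "Suc l + l = Suc (2*l)" "Suc l - l = 1" by simp_all
  have a: "sph_norm l l ^ 2 = (2 * real l + 1) / (4 * pi) / fact (2*l)"
    using sph_norm_sq[of l l] unfolding e1 by simp
  have b: "sph_norm (Suc l) l ^ 2 = (2 * real (Suc l) + 1) / (4 * pi) / fact (Suc (2*l))"
    using sph_norm_sq[of "Suc l" l] unfolding e1 by simp
  have f: "(fact (Suc (2*l)) :: real) = (2*real l+1) * fact (2*l)" by (simp add: fact_Suc)
  define F where "F = (fact (2*l) :: real)"
  define d where "d = 2*real l+1"
  have p: "F \<noteq> 0" "d \<noteq> 0" "pi \<noteq> 0" unfolding F_def d_def by auto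
  have e: "2 * real (Suc l) + 1 = d + 2" "2 * real l + 3 = d + 2" unfolding d_def by simp_all
  show ?thesis unfolding top_const0_def top_const1_def a b legendre_top_Suc f F_def[symmetric] d_def[symmetric] e using p
    by (simp add: field_simps power2_eq_square)
qed

lemma opC33_Psi_top:
  "opC 3 3 (Psi l (int l) (int l)) = (\<lambda>z. of_real ((2*real l+1) / (2*real l+3)) * Psi (Suc l) (int l) (int l) z)"
proof (rule ext, clarify)
  fix u v :: "real^3"
  have dv_deriv: "((\<lambda>t. bessel_red l (sqnorm u * sqnorm (v + t *\<^sub>R axis 3 1))) has_real_derivative (- sqnorm u * v$3 * bessel_red (Suc l) (sqnorm u * sqnorm v))) (at 0)" for u v
    by (auto intro!: derivative_eq_intros sqnorm_axis3_deriv simp: algebra_simps)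
  have du_deriv: "((\<lambda>t. - sqnorm (u + t *\<^sub>R axis 3 1) * v$3 * bessel_red (Suc l) (sqnorm (u + t *\<^sub>R axis 3 1) * sqnorm v)) has_real_derivative
      (-2 * u$3 * v$3 * bessel_red (Suc l) (sqnorm u * sqnorm v) + u$3 * v$3 * (sqnorm u * sqnorm v) * bessel_red (Suc (Suc l)) (sqnorm u * sqnorm v))) (at 0)" for u v
    by (auto intro!: derivative_eq_intros sqnorm_axis3_deriv simp: algebra_simps)
  have opC_expanded: "opC 3 3 (Psi l (int l) (int l)) (u,v) = of_real (top_const0 l) * xy_cplx 1 u ^ l * xy_cplx 1 v ^ l *
      of_real (u$3 * v$3 * bessel_red l (sqnorm u * sqnorm v) + (-2 * u$3 * v$3 * bessel_red (Suc l) (sqnorm u * sqnorm v) + u$3 * v$3 * (sqnorm u * sqnorm v) * bessel_red (Suc (Suc l)) (sqnorm u * sqnorm v)))"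
    unfolding Psi_top_eq
    by (rule opC33_xy_cplx[where F = "\<lambda>u v. bessel_red l (sqnorm u * sqnorm v)" and Fv = "\<lambda>u v. - sqnorm u * v$3 * bessel_red (Suc l) (sqnorm u * sqnorm v)"])
       (use dv_deriv du_deriv in auto)
  have bessel_rec: "bessel_red l (sqnorm u * sqnorm v) + (sqnorm u * sqnorm v) * bessel_red (Suc (Suc l)) (sqnorm u * sqnorm v) = (2*real l+3) * bessel_red (Suc l) (sqnorm u * sqnorm v)"
    using bessel_red_recurrence[of l "sqnorm u * sqnorm v"] by (simp add: numeral_2_eq_2)
  have "u$3 * v$3 * bessel_red l (sqnorm u * sqnorm v) + (-2 * u$3 * v$3 * bessel_red (Suc l) (sqnorm u * sqnorm v) + u$3 * v$3 * (sqnorm u * sqnorm v) * bessel_red (Suc (Suc l)) (sqnorm u * sqnorm v))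
     = (2*real l+1) * (u$3 * v$3 * bessel_red (Suc l) (sqnorm u * sqnorm v))"
    using bessel_rec by algebra
  moreover have "top_const1 l \<noteq> 0"
    using top_const_pos(2)[of l] by simp
  moreover have coeff_eq: "(2*real l+1) / (2*real l+3) = (2*real l+1) * top_const0 l / top_const1 l"
    using top_const_pos(1)[of l] by (simp add: top_const1_eq)
  ultimately show "opC 3 3 (Psi l (int l) (int l)) (u,v) = of_real ((2*real l+1) / (2*real l+3)) * Psi (Suc l) (int l) (int l) (u,v)"
    unfolding opC_expanded Psi_top_Suc coeff_eq by (simp add: field_simps)
qed

lemma opC33_top_Suc_identity:
  fixes g0 g1 g2 g3 a b nu nv c :: real
  assumes "g0 + nu*nv*g2 = c * g1" "g1 + nu*nv*g3 = (c+2) * g2"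
  shows "c * (a*b*(a*b*g1) + (g1 - a^2*nv*g2 - b^2*nu*g2 - 2*a^2*b^2*g2 + a^2*b^2*(nu*nv)*g3))
       = g0 + (c*a^2 - nu)*(c*b^2 - nv)*g2"
  using assms by algebra

lemma opC33_Psi_top_Suc: "opC 3 3 (Psi (Suc l) (int l) (int l)) = (\<lambda>z.
    Psi l (int l) (int l) z + of_real (top_const0 l / top_const2 l) * Psi (Suc (Suc l)) (int l) (int l) z)"
proof (rule ext, clarify)
  fix u v :: "real^3"
  have dv_deriv: "((\<lambda>t. u$3 * (v + t *\<^sub>R axis 3 1)$3 * bessel_red (Suc l) (sqnorm u * sqnorm (v + t *\<^sub>R axis 3 1))) has_real_derivative
      (u$3 * bessel_red (Suc l) (sqnorm u * sqnorm v) - u$3 * v$3^2 * sqnorm u * bessel_red (Suc (Suc l)) (sqnorm u * sqnorm v))) (at 0)" for u v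
    unfolding axis3_line_components by (auto intro!: derivative_eq_intros sqnorm_axis3_deriv simp: algebra_simps power2_eq_square)
  have du_deriv: "((\<lambda>t. (u + t *\<^sub>R axis 3 1)$3 * bessel_red (Suc l) (sqnorm (u + t *\<^sub>R axis 3 1) * sqnorm v)
        - (u + t *\<^sub>R axis 3 1)$3 * v$3^2 * sqnorm (u + t *\<^sub>R axis 3 1) * bessel_red (Suc (Suc l)) (sqnorm (u + t *\<^sub>R axis 3 1) * sqnorm v)) has_real_derivative
      (bessel_red (Suc l) (sqnorm u * sqnorm v) - u$3^2 * sqnorm v * bessel_red (Suc (Suc l)) (sqnorm u * sqnorm v) - v$3^2 * sqnorm u * bessel_red (Suc (Suc l)) (sqnorm u * sqnorm v)
        - 2 * u$3^2 * v$3^2 * bessel_red (Suc (Suc l)) (sqnorm u * sqnorm v) + u$3^2 * v$3^2 * (sqnorm u * sqnorm v) * bessel_red (Suc (Suc (Suc l))) (sqnorm u * sqnorm v))) (at 0)" for u v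
    unfolding axis3_line_components by (auto intro!: derivative_eq_intros sqnorm_axis3_deriv simp: algebra_simps power2_eq_square)
  have opC_expanded: "opC 3 3 (Psi (Suc l) (int l) (int l)) (u,v) = of_real (top_const1 l) * xy_cplx 1 u ^ l * xy_cplx 1 v ^ l *
      of_real (u$3 * v$3 * (u$3 * v$3 * bessel_red (Suc l) (sqnorm u * sqnorm v)) +
       (bessel_red (Suc l) (sqnorm u * sqnorm v) - u$3^2 * sqnorm v * bessel_red (Suc (Suc l)) (sqnorm u * sqnorm v) - v$3^2 * sqnorm u * bessel_red (Suc (Suc l)) (sqnorm u * sqnorm v)
        - 2 * u$3^2 * v$3^2 * bessel_red (Suc (Suc l)) (sqnorm u * sqnorm v) + u$3^2 * v$3^2 * (sqnorm u * sqnorm v) * bessel_red (Suc (Suc (Suc l))) (sqnorm u * sqnorm v)))"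
    unfolding Psi_top_Suc_eq
    by (rule opC33_xy_cplx[where F = "\<lambda>u v. u$3 * v$3 * bessel_red (Suc l) (sqnorm u * sqnorm v)"
          and Fv = "\<lambda>u v. u$3 * bessel_red (Suc l) (sqnorm u * sqnorm v) - u$3 * v$3^2 * sqnorm u * bessel_red (Suc (Suc l)) (sqnorm u * sqnorm v)"])
       (use dv_deriv du_deriv in auto)
  define c where "c = 2*real l+3"
  have bessel_rec: "bessel_red l (sqnorm u * sqnorm v) + sqnorm u * sqnorm v * bessel_red (Suc (Suc l)) (sqnorm u * sqnorm v) = c * bessel_red (Suc l) (sqnorm u * sqnorm v)"
    using bessel_red_recurrence[of l "sqnorm u * sqnorm v"] by (simp add: numeral_2_eq_2 c_def)
  have bessel_rec_Suc: "bessel_red (Suc l) (sqnorm u * sqnorm v) + sqnorm u * sqnorm v * bessel_red (Suc (Suc (Suc l))) (sqnorm u * sqnorm v) = (c+2) * bessel_red (Suc (Suc l)) (sqnorm u * sqnorm v)"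
    using bessel_red_recurrence[of "Suc l" "sqnorm u * sqnorm v"] by (simp add: numeral_2_eq_2 c_def algebra_simps)
  have combined: "c * (u$3 * v$3 * (u$3 * v$3 * bessel_red (Suc l) (sqnorm u * sqnorm v)) +
       (bessel_red (Suc l) (sqnorm u * sqnorm v) - u$3^2 * sqnorm v * bessel_red (Suc (Suc l)) (sqnorm u * sqnorm v) - v$3^2 * sqnorm u * bessel_red (Suc (Suc l)) (sqnorm u * sqnorm v)
        - 2 * u$3^2 * v$3^2 * bessel_red (Suc (Suc l)) (sqnorm u * sqnorm v) + u$3^2 * v$3^2 * (sqnorm u * sqnorm v) * bessel_red (Suc (Suc (Suc l))) (sqnorm u * sqnorm v)))
     = bessel_red l (sqnorm u * sqnorm v) + (c * u$3^2 - sqnorm u) * (c * v$3^2 - sqnorm v) * bessel_red (Suc (Suc l)) (sqnorm u * sqnorm v)"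
    by (rule opC33_top_Suc_identity[OF bessel_rec bessel_rec_Suc])
  have nonzero: "top_const0 l \<noteq> 0" "top_const2 l \<noteq> 0" "c \<noteq> 0" using top_const_pos[of l] unfolding c_def by auto
  have top_const1_c: "top_const1 l = c * top_const0 l"
    unfolding c_def by (rule top_const1_eq)
  show "opC 3 3 (Psi (Suc l) (int l) (int l)) (u,v) =
    Psi l (int l) (int l) (u,v) + of_real (top_const0 l / top_const2 l) * Psi (Suc (Suc l)) (int l) (int l) (u,v)"
    unfolding opC_expanded Psi_top Psi_top_Suc_Suc c_def[symmetric] top_const1_c
  proof -
    define X where "X = u$3 * v$3 * (u$3 * v$3 * bessel_red (Suc l) (sqnorm u * sqnorm v)) +
       (bessel_red (Suc l) (sqnorm u * sqnorm v) - u$3^2 * sqnorm v * bessel_red (Suc (Suc l)) (sqnorm u * sqnorm v) - v$3^2 * sqnorm u * bessel_red (Suc (Suc l)) (sqnorm u * sqnorm v)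
        - 2 * u$3^2 * v$3^2 * bessel_red (Suc (Suc l)) (sqnorm u * sqnorm v) + u$3^2 * v$3^2 * (sqnorm u * sqnorm v) * bessel_red (Suc (Suc (Suc l))) (sqnorm u * sqnorm v))"
    have X_eq: "X = (bessel_red l (sqnorm u * sqnorm v) + (c * u$3^2 - sqnorm u) * (c * v$3^2 - sqnorm v) * bessel_red (Suc (Suc l)) (sqnorm u * sqnorm v)) / c"
      using combined nonzero(3) unfolding X_def[symmetric] by (simp add: field_simps)
    show "of_real (c * top_const0 l) * xy_cplx 1 u ^ l * xy_cplx 1 v ^ l * of_real X =
      of_real (top_const0 l) * xy_cplx 1 u ^ l * xy_cplx 1 v ^ l * of_real (bessel_red l (sqnorm u * sqnorm v)) +
      of_real (top_const0 l / top_const2 l) * (of_real (top_const2 l) * xy_cplx 1 u ^ l * xy_cplx 1 v ^ l *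
        of_real ((c * u$3^2 - sqnorm u) * (c * v$3^2 - sqnorm v) * bessel_red (Suc (Suc l)) (sqnorm u * sqnorm v)))"
      unfolding X_eq using nonzero by (simp add: field_simps)
  qed
qed

lemma Psi_eq_0_m: "nat \<bar>m\<bar> > l \<Longrightarrow> Psi l m n = (\<lambda>x. 0)"
  by (auto simp: Psi_def sph_Y_eq_0 fun_eq_iff)

lemma Psi_eq_0_n: "nat \<bar>n\<bar> > l \<Longrightarrow> Psi l m n = (\<lambda>x. 0)"
  by (auto simp: Psi_def sph_Y_eq_0 fun_eq_iff)

lemma Vphys_zero: "(\<lambda>x. 0) \<in> Vphys"
  unfolding Vphys_def by (rule CollectI, rule exI[of _ "{}"]) auto

lemma Psi_in_Vphys: "Psi l m n \<in> Vphys"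
proof (cases "(l,m,n) \<in> valid_idx")
  case True
  show ?thesis unfolding Vphys_def
    by (rule CollectI, rule exI[of _ "{(l,m,n)}"], rule exI[of _ "\<lambda>_. 1"]) (use True in auto)
next
  case False
  hence "nat \<bar>m\<bar> > l \<or> nat \<bar>n\<bar> > l" by (auto simp: valid_idx_def)
  hence "Psi l m n = (\<lambda>x. 0)" using Psi_eq_0_m Psi_eq_0_n by blast
  thus ?thesis using Vphys_zero by simp
qed

lemma Vphys_scale: "f \<in> Vphys \<Longrightarrow> (\<lambda>x. c * f x) \<in> Vphys"
proof -
  assume "f \<in> Vphys"
  then obtain S d where "finite S \<and> S \<subseteq> valid_idx \<and> f = (\<lambda>x. \<Sum>(l,m,n)\<in>S. d (l,m,n) * Psi l m n x)"
    unfolding Vphys_def mem_Collect_eq by (elim exE)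
  hence S: "finite S" "S \<subseteq> valid_idx" "f = (\<lambda>x. \<Sum>(l,m,n)\<in>S. d (l,m,n) * Psi l m n x)" by auto
  have "(\<lambda>x. c * f x) = (\<lambda>x. \<Sum>(l,m,n)\<in>S. (\<lambda>i. c * d i) (l,m,n) * Psi l m n x)"
    unfolding S(3) by (simp add: sum_distrib_left case_prod_beta mult.assoc)
  thus ?thesis unfolding Vphys_def mem_Collect_eq using S(1,2) by (intro exI conjI)
qed

lemma Vphys_add: "f \<in> Vphys \<Longrightarrow> g \<in> Vphys \<Longrightarrow> (\<lambda>x. f x + g x) \<in> Vphys"
proof -
  assume a: "f \<in> Vphys" "g \<in> Vphys"
  from a(1) obtain S d where "finite S \<and> S \<subseteq> valid_idx \<and> f = (\<lambda>x. \<Sum>(l,m,n)\<in>S. d (l,m,n) * Psi l m n x)"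
    unfolding Vphys_def mem_Collect_eq by (elim exE)
  hence S: "finite S" "S \<subseteq> valid_idx" "f = (\<lambda>x. \<Sum>(l,m,n)\<in>S. d (l,m,n) * Psi l m n x)" by auto
  from a(2) obtain T e where "finite T \<and> T \<subseteq> valid_idx \<and> g = (\<lambda>x. \<Sum>(l,m,n)\<in>T. e (l,m,n) * Psi l m n x)"
    unfolding Vphys_def mem_Collect_eq by (elim exE)
  hence T: "finite T" "T \<subseteq> valid_idx" "g = (\<lambda>x. \<Sum>(l,m,n)\<in>T. e (l,m,n) * Psi l m n x)" by auto
  define d' where "d' = (\<lambda>i. if i \<in> S then d i else 0)"
  define e' where "e' = (\<lambda>i. if i \<in> T then e i else 0)"
  have f: "f x = (\<Sum>i\<in>S \<union> T. d' i * Psi (fst i) (fst (snd i)) (snd (snd i)) x)" for x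
  proof -
    have "f x = (\<Sum>i\<in>S. d' i * Psi (fst i) (fst (snd i)) (snd (snd i)) x)"
      unfolding S(3) d'_def by (auto simp: case_prod_beta intro!: sum.cong)
    also have "\<dots> = (\<Sum>i\<in>S \<union> T. d' i * Psi (fst i) (fst (snd i)) (snd (snd i)) x)"
      by (rule sum.mono_neutral_left) (auto simp: S(1) T(1) d'_def)
    finally show ?thesis .
  qed
  have g: "g x = (\<Sum>i\<in>S \<union> T. e' i * Psi (fst i) (fst (snd i)) (snd (snd i)) x)" for x
  proof -
    have "g x = (\<Sum>i\<in>T. e' i * Psi (fst i) (fst (snd i)) (snd (snd i)) x)"
      unfolding T(3) e'_def by (auto simp: case_prod_beta intro!: sum.cong)
    also have "\<dots> = (\<Sum>i\<in>S \<union> T. e' i * Psi (fst i) (fst (snd i)) (snd (snd i)) x)"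
      by (rule sum.mono_neutral_left) (auto simp: S(1) T(1) e'_def)
    finally show ?thesis .
  qed
  have "(\<lambda>x. f x + g x) = (\<lambda>x. \<Sum>(l,m,n)\<in>S \<union> T. (\<lambda>i. d' i + e' i) (l,m,n) * Psi l m n x)"
    unfolding f g by (simp add: case_prod_beta sum.distrib[symmetric] distrib_right)
  moreover have "finite (S \<union> T)" "S \<union> T \<subseteq> valid_idx" using S T by auto
  ultimately show ?thesis unfolding Vphys_def mem_Collect_eq by (intro exI conjI)
qed

lemma Vphys_components:
  assumes "(\<lambda>z. a z + \<i> * b z) \<in> Vphys" "(\<lambda>z. a z - \<i> * b z) \<in> Vphys"
  shows "a \<in> Vphys" "b \<in> Vphys"
proof -
  have a_eq: "a = (\<lambda>z. 1/2 * (a z + \<i> * b z) + 1/2 * (a z - \<i> * b z))"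
    by (simp add: fun_eq_iff field_simps)
  show "a \<in> Vphys"
    by (subst a_eq) (intro Vphys_add Vphys_scale assms)
  have b_eq: "b = (\<lambda>z. - \<i>/2 * (a z + \<i> * b z) + \<i>/2 * (a z - \<i> * b z))"
    by (simp add: fun_eq_iff field_simps)
  show "b \<in> Vphys"
    by (subst b_eq) (intro Vphys_add Vphys_scale assms)
qed

lemma opA_Psi_in_Vphys:
  assumes "\<bar>m\<bar> \<le> int l"
  shows "opA 2 3 (Psi l m n) \<in> Vphys" "opA 3 1 (Psi l m n) \<in> Vphys"
  using Vphys_components[of "opA 2 3 (Psi l m n)" "opA 3 1 (Psi l m n)"]
    Psi_u_ladder(2,3)[OF assms] Vphys_scale[OF Psi_in_Vphys]
  unfolding Lplus_u_def Lminus_u_def by simp_all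

lemma opB_Psi_in_Vphys:
  assumes "\<bar>n\<bar> \<le> int l"
  shows "opB 2 3 (Psi l m n) \<in> Vphys" "opB 3 1 (Psi l m n) \<in> Vphys"
  using Vphys_components[of "opB 2 3 (Psi l m n)" "opB 3 1 (Psi l m n)"]
    Psi_v_ladder(2,3)[OF assms] Vphys_scale[OF Psi_in_Vphys]
  unfolding Lplus_v_def Lminus_v_def by simp_all

lemma Psi_0_0_0_nonzero: "Psi 0 0 0 \<noteq> (\<lambda>x. 0)"
proof
  assume "Psi 0 0 0 = (\<lambda>x. 0)"
  then have "Psi 0 (int 0) (int 0) (0, 0) = 0"
    by simp
  moreover have "Psi 0 (int 0) (int 0) (0, 0) = of_real (top_const0 0)"
    unfolding Psi_top by (simp add: sqnorm_def bessel_red_0_0)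
  ultimately show False
    using top_const_pos(1)[of 0] by simp
qed

section \<open>Inner products of the Psi_lmn\<close>

lemma int_step_const:
  fixes f :: "int \<Rightarrow> 'a"
  assumes succ: "\<And>i. a \<le> i \<Longrightarrow> i < b \<Longrightarrow> f i = f (i + 1)" and "a \<le> m" "m \<le> b"
  shows "f m = f b"
  using \<open>m \<le> b\<close> \<open>a \<le> m\<close>
proof (induction m rule: int_le_induct)
  case (step i)
  then show ?case
    using succ[of "i - 1"] by simp
qed simp

locale Vphys_symmetric_inner_product = inner_product_space_on Vphys ip for ip +
  assumes opA_symmetric: "\<And>i j. symmetric_on Vphys ip (opA i j)"
    and opB_symmetric: "\<And>i j. symmetric_on Vphys ip (opB i j)"
    and opC_symmetric: "\<And>i j. symmetric_on Vphys ip (opC i j)"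
begin

lemma Psi_orthogonal_m:
  assumes "\<bar>m\<bar> \<le> int l" "\<bar>m'\<bar> \<le> int l'" "m \<noteq> m'"
  shows "ip (Psi l m n) (Psi l' m' n') = 0"
proof (rule symmetric_eigenvectors_orthogonal[OF opA_symmetric Psi_in_Vphys Psi_in_Vphys])
  show "opA 1 2 (Psi l m n) = (\<lambda>x. of_real (of_int m) * Psi l m n x)"
    "opA 1 2 (Psi l' m' n') = (\<lambda>x. of_real (of_int m') * Psi l' m' n' x)"
    using Psi_u_ladder(1)[OF assms(1)] Psi_u_ladder(1)[OF assms(2)] by simp_all
qed (use assms in simp)

lemma Psi_orthogonal_n:
  assumes "\<bar>n\<bar> \<le> int l" "\<bar>n'\<bar> \<le> int l'" "n \<noteq> n'"
  shows "ip (Psi l m n) (Psi l' m' n') = 0"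
proof (rule symmetric_eigenvectors_orthogonal[OF opB_symmetric Psi_in_Vphys Psi_in_Vphys])
  show "opB 1 2 (Psi l m n) = (\<lambda>x. of_real (of_int n) * Psi l m n x)"
    "opB 1 2 (Psi l' m' n') = (\<lambda>x. of_real (of_int n') * Psi l' m' n' x)"
    using Psi_v_ladder(1)[OF assms(1)] Psi_v_ladder(1)[OF assms(2)] by simp_all
qed (use assms in simp)

lemma Psi_ladder_u:
  assumes "\<bar>m\<bar> \<le> int l" "\<bar>m'\<bar> \<le> int l'"
  shows "raise_coeff l m * ip (Psi l (m+1) n) (Psi l' m' n') = lower_coeff l' m' * ip (Psi l m n) (Psi l' (m'-1) n')"
proof -
  have "ip (Lplus_u (Psi l m n)) (Psi l' m' n') = ip (Psi l m n) (Lminus_u (Psi l' m' n'))"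
    unfolding Lplus_u_def Lminus_u_def
    by (rule symmetric_ladder_adjoint) (auto intro: opA_symmetric Psi_in_Vphys opA_Psi_in_Vphys assms)
  then show ?thesis
    unfolding Psi_u_ladder(2)[OF assms(1)] Psi_u_ladder(3)[OF assms(2)]
    by (simp add: ip_scale_left ip_scale_right Psi_in_Vphys)
qed

lemma Psi_ladder_v:
  assumes "\<bar>n\<bar> \<le> int l" "\<bar>n'\<bar> \<le> int l'"
  shows "raise_coeff l n * ip (Psi l m (n+1)) (Psi l' m' n') = lower_coeff l' n' * ip (Psi l m n) (Psi l' m' (n'-1))"
proof -
  have "ip (Lplus_v (Psi l m n)) (Psi l' m' n') = ip (Psi l m n) (Lminus_v (Psi l' m' n'))"
    unfolding Lplus_v_def Lminus_v_def
    by (rule symmetric_ladder_adjoint) (auto intro: opB_symmetric Psi_in_Vphys opB_Psi_in_Vphys assms)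
  then show ?thesis
    unfolding Psi_v_ladder(2)[OF assms(1)] Psi_v_ladder(3)[OF assms(2)]
    by (simp add: ip_scale_left ip_scale_right Psi_in_Vphys)
qed

text \<open>Descending induction on m, starting from m = l where the raising coefficient vanishes.\<close>

lemma Psi_orthogonal_l_less:
  assumes "l < l'" "- int l \<le> m" "m \<le> int l" "\<bar>n\<bar> \<le> int l"
  shows "ip (Psi l m n) (Psi l' m n) = 0"
  using \<open>m \<le> int l\<close> \<open>- int l \<le> m\<close>
proof (induction m rule: int_le_induct)
  case base
  have "lower_coeff l' (int l + 1) > 0"
    using assms by (intro lower_coeff_pos) auto
  then show ?case
    using Psi_ladder_u[of "int l" l "int l + 1" l' n n] assms by (simp add: raise_coeff_top)
next
  case (step i)
  have "lower_coeff l' i > 0"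
    using lower_coeff_pos[of l' "i - 1"] step assms by simp
  then show ?case
    using Psi_ladder_u[of "i - 1" l i l' n n] step assms by simp
qed

lemma Psi_orthogonal_l:
  assumes "l \<noteq> l'" "\<bar>m\<bar> \<le> int l" "\<bar>n\<bar> \<le> int l" "\<bar>m\<bar> \<le> int l'" "\<bar>n\<bar> \<le> int l'"
  shows "ip (Psi l m n) (Psi l' m n) = 0"
proof (cases "l < l'")
  case True
  then show ?thesis
    using Psi_orthogonal_l_less assms by auto
next
  case False
  then have "ip (Psi l' m n) (Psi l m n) = 0"
    using Psi_orthogonal_l_less assms by auto
  then show ?thesis
    using ip_commute[OF Psi_in_Vphys Psi_in_Vphys, of l' m n l m n] by simp
qed

lemma Psi_norm_indep_m:
  assumes "\<bar>m\<bar> \<le> int l"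
  shows "ip (Psi l m n) (Psi l m n) = ip (Psi l (int l) n) (Psi l (int l) n)"
proof (rule int_step_const[where a = "- int l"])
  fix i
  assume "- int l \<le> i" "i < int l"
  then show "ip (Psi l i n) (Psi l i n) = ip (Psi l (i + 1) n) (Psi l (i + 1) n)"
    using Psi_ladder_u[of i l "i + 1" l n n] lower_coeff_pos[of l i]
    by (simp add: raise_coeff_eq_lower_coeff)
qed (use assms in auto)

lemma Psi_norm_indep_n:
  assumes "\<bar>n\<bar> \<le> int l"
  shows "ip (Psi l m n) (Psi l m n) = ip (Psi l m (int l)) (Psi l m (int l))"
proof (rule int_step_const[where a = "- int l"])
  fix i
  assume "- int l \<le> i" "i < int l"
  then show "ip (Psi l m i) (Psi l m i) = ip (Psi l m (i + 1)) (Psi l m (i + 1))"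
    using Psi_ladder_v[of i l "i + 1" l m m] lower_coeff_pos[of l i]
    by (simp add: raise_coeff_eq_lower_coeff)
qed (use assms in auto)

definition top_norm :: "nat \<Rightarrow> complex" where
  "top_norm l = ip (Psi l (int l) (int l)) (Psi l (int l) (int l))"

lemma Psi_norm_eq_top_norm:
  assumes "\<bar>m\<bar> \<le> int l" "\<bar>n\<bar> \<le> int l"
  shows "ip (Psi l m n) (Psi l m n) = top_norm l"
  unfolding top_norm_def using Psi_norm_indep_m[OF assms(1)] Psi_norm_indep_n[OF assms(2)] by simp

lemma top_norm_Suc: "top_norm (Suc l) = of_real ((2*real l+3) / (2*real l+1)) * top_norm l"
proof -
  txt \<open>Symmetry of C_33 between Psi_lll and Psi_(l+1)ll; the Psi_(l+2)ll component of
    C_33 Psi_(l+1)ll is orthogonal to Psi_lll.\<close>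
  have "ip (opC 3 3 (Psi l (int l) (int l))) (Psi (Suc l) (int l) (int l))
      = ip (Psi l (int l) (int l)) (opC 3 3 (Psi (Suc l) (int l) (int l)))"
    using opC_symmetric Psi_in_Vphys unfolding symmetric_on_def by blast
  moreover have "ip (opC 3 3 (Psi l (int l) (int l))) (Psi (Suc l) (int l) (int l))
      = of_real ((2*real l+1) / (2*real l+3)) * top_norm (Suc l)"
    unfolding opC33_Psi_top ip_scale_left[OF Psi_in_Vphys Psi_in_Vphys]
    using Psi_norm_eq_top_norm[of "int l" "Suc l" "int l"] by simp
  moreover have "ip (Psi l (int l) (int l)) (Psi (Suc (Suc l)) (int l) (int l)) = 0"
    by (rule Psi_orthogonal_l_less) auto
  then have "ip (Psi l (int l) (int l)) (opC 3 3 (Psi (Suc l) (int l) (int l))) = top_norm l"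
    unfolding opC33_Psi_top_Suc top_norm_def
      ip_add_right[OF Psi_in_Vphys Psi_in_Vphys Vphys_scale[OF Psi_in_Vphys]]
      ip_scale_right[OF Psi_in_Vphys Psi_in_Vphys]
    by simp
  ultimately have scaled: "of_real ((2*real l+1) / (2*real l+3)) * top_norm (Suc l) = top_norm l"
    by simp
  have "(2*real l+3) / (2*real l+1) * ((2*real l+1) / (2*real l+3)) = 1"
    by (simp add: add_pos_nonneg)
  then have "top_norm (Suc l)
      = of_real ((2*real l+3) / (2*real l+1)) * (of_real ((2*real l+1) / (2*real l+3)) * top_norm (Suc l))"
    by (simp only: mult.assoc[symmetric] of_real_mult[symmetric] of_real_1 mult_1)
  then show ?thesis
    unfolding scaled .
qed

lemma top_norm_eq: "top_norm l = of_real (2*real l+1) * top_norm 0"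
proof (induction l)
  case (Suc l)
  have "top_norm (Suc l) = of_real ((2*real l+3) / (2*real l+1) * (2*real l+1)) * top_norm 0"
    unfolding top_norm_Suc Suc.IH by (simp only: of_real_mult mult.assoc)
  also have "(2*real l+3) / (2*real l+1) * (2*real l+1) = 2 * real (Suc l) + 1"
    by (simp add: add_pos_nonneg)
  finally show ?case .
qed simp

lemma top_norm_0_pos: "Re (top_norm 0) > 0"
  unfolding top_norm_def using ip_self_pos[OF Psi_in_Vphys Psi_0_0_0_nonzero] by simp

lemma Psi_norm:
  assumes "(l,m,n) \<in> valid_idx"
  shows "ip (Psi l m n) (Psi l m n) = of_real (Re (top_norm 0) * (2 * real l + 1))"
proof -
  have "ip (Psi l m n) (Psi l m n) = top_norm l"
    using assms by (intro Psi_norm_eq_top_norm) (auto simp: valid_idx_def)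
  also have "\<dots> = of_real (2*real l+1) * top_norm 0"
    by (rule top_norm_eq)
  also have "top_norm 0 = of_real (Re (top_norm 0))"
    unfolding top_norm_def by (rule ip_self_real[OF Psi_in_Vphys])
  finally show ?thesis
    by (simp only: of_real_mult mult.commute)
qed

lemma Psi_orthogonal:
  assumes "(l,m,n) \<in> valid_idx" "(l',m',n') \<in> valid_idx" "(l,m,n) \<noteq> (l',m',n')"
  shows "ip (Psi l m n) (Psi l' m' n') = 0"
proof -
  have bounds: "\<bar>m\<bar> \<le> int l" "\<bar>n\<bar> \<le> int l" "\<bar>m'\<bar> \<le> int l'" "\<bar>n'\<bar> \<le> int l'"
    using assms(1,2) by (auto simp: valid_idx_def)
  consider "m \<noteq> m'" | "n \<noteq> n'" | "m = m'" "n = n'" "l \<noteq> l'"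
    using assms(3) by auto
  then show ?thesis
  proof cases
    case 1
    then show ?thesis using Psi_orthogonal_m bounds(1,3) by blast
  next
    case 2
    then show ?thesis using Psi_orthogonal_n bounds(2,4) by blast
  next
    case 3
    then show ?thesis using Psi_orthogonal_l[of l l' m n] bounds by simp
  qed
qed

end

theorem mainTheorem7:
  fixes ip :: "phfun \<Rightarrow> phfun \<Rightarrow> complex"
  assumes "is_inner_product_on Vphys ip"
    and "\<And>i j. symmetric_on Vphys ip (opA i j)"
    and "\<And>i j. symmetric_on Vphys ip (opB i j)"
    and "\<And>i j. symmetric_on Vphys ip (opC i j)"
  shows "\<exists>r::real. r > 0 \<and>
    (\<forall>l m n l' m' n'. (l,m,n) \<in> valid_idx \<longrightarrow> (l',m',n') \<in> valid_idx \<longrightarrow>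
       ip (Psi l m n) (Psi l' m' n') =
         (if l = l' \<and> m = m' \<and> n = n' then complex_of_real (r * (2 * real l + 1)) else 0))"
proof -
  interpret Vphys_symmetric_inner_product ip
    by unfold_locales (simp_all add: assms Vphys_add Vphys_scale)
  show ?thesis
  proof (intro exI conjI allI impI)
    fix l m n l' m' n'
    assume "(l,m,n) \<in> valid_idx" "(l',m',n') \<in> valid_idx"
    then show "ip (Psi l m n) (Psi l' m' n') =
      (if l = l' \<and> m = m' \<and> n = n' then complex_of_real (Re (top_norm 0) * (2 * real l + 1)) else 0)"
      using Psi_norm[of l m n] Psi_orthogonal[of l m n l' m' n'] by (cases "l = l' \<and> m = m' \<and> n = n'") auto
  qed (rule top_norm_0_pos)
qed

end
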